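(* Consider the problem and Algorithm 1 as described in the context, under the standing assumptions. Let the parameters satisfy $$0<p=\gamma\le \tfrac{1}{16},\qquad \eta=\min\Big\{\frac{\sqrt{\gamma b}}{8\bar L},\ \frac{1}{8L}\Big\},$$ let $K\ge 1$, and let $\bar x^K=\frac1K\sum_{k=0}^{K-1}x^{k+1}$. Then for every nonempty compact set $\mathcal C\subseteq\mathbb R^d$, $$\mathbb E\big[\mathrm{Gap}_{\mathcal C}(\bar x^K)\big]\le \frac{2}{\eta K}\max_{x\in\mathcal C}\|x^0-x\|^2 .$$ Consequently, setting $D^2=\max_{x\in\mathcal C}\|x^0-x\|^2$, given $\varepsilon>0$ one has $\mathbb E[\mathrm{Gap}_{\mathcal C}(\bar x^K)]\le\varepsilon$ after $$K=\mathcal O\Big(\frac{1}{\sqrt{pb}}\cdot\frac{\bar L D^2}{\varepsilon}+\frac{L D^2}{\varepsilon}\Big)$$ iterations.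
   Context: Let $g:\mathbb R^d\to\mathbb R\cup\{+\infty\}$ be proper, convex and lower semicontinuous, with $\mathrm{dom}\, g=\{x:g(x)<+\infty\}$ and $\mathrm{prox}_{\alpha g}(x)=\arg\min_y\{\alpha g(y)+\tfrac12\|y-x\|^2\}$ for $\alpha>0$. Let $F=\frac1M\sum_{m=1}^M F_m$ where $F_1,\dots,F_M:\mathbb R^d\to\mathbb R^d$ are single-valued operators. Standing assumptions: the variational inequality (find $x^*$ with $\langle F(x^* ),x-x^*\rangle+g(x)-g(x^* )\ge0$ for all $x$) has a solution; $F$ is monotone, $\langle F(u)-F(v),u-v\rangle\ge0$ for all $u,v$; $F$ is $L$-Lipschitz; each $F_m$ is $L_m$-Lipschitz, and $\bar L^2:=\frac1M\sum_{m=1}^M L_m^2$. Algorithm 1 (Optimistic Method with Momentum and Batching), with stepsize $\eta>0$, momentum $\gamma>0$, probability $p\in(0,1)$, batch size $b\in\{1,\dots,M\}$: initialize $x^0=w^0=x^{-1}=w^{-1}\in\mathbb R^d$. For $k=0,1,\dots$: sample $j^k_1,\dots,j^k_b$ independently and uniformly at random from $\{1,\dots,M\}$ and set $S^k=\{j^k_1,\dots,j^k_b\}$ (a multiset; sums over $S^k$ run over the $b$ samples); set $$\Delta^k=\frac1b\sum_{j\in S^k}\Big(F_j(x^k)-F_j(w^{k-1})+\big(F_j(x^k)-F_j(x^{k-1})\big)\Big)+F(w^{k-1});$$ set $x^{k+1}=\mathrm{prox}_{\eta g}\big(x^k+\gamma(w^k-x^k)-\eta\Delta^k\big)$; and set $w^{k+1}=x^{k+1}$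 with probability $p$ and $w^{k+1}=w^k$ with probability $1-p$, independently of everything else. For a nonempty compact set $\mathcal C\subseteq\mathbb R^d$, the gap function is $\mathrm{Gap}_{\mathcal C}(z)=\sup_{u\in\mathcal C}\big[\langle F(u),z-u\rangle+g(z)-g(u)\big]$. *)

theory Defs
  imports "HOL-Analysis.Analysis" "HOL-Probability.Probability"
begin

definition proper_fun :: "('a \<Rightarrow> ereal) \<Rightarrow> bool" where
  "proper_fun g \<longleftrightarrow> (\<forall>x. g x \<noteq> -\<infinity>) \<and> (\<exists>x. g x \<noteq> \<infinity>)"

definition ereal_convex :: "('a::real_vector \<Rightarrow> ereal) \<Rightarrow> bool" where
  "ereal_convex g \<longleftrightarrow>
     (\<forall>x y. \<forall>t::real. 0 \<le> t \<and> t \<le> 1 \<longrightarrow>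
        g ((1 - t) *\<^sub>R x + t *\<^sub>R y) \<le> ereal (1 - t) * g x + ereal t * g y)"

definition lsc_fun :: "('a::topological_space \<Rightarrow> ereal) \<Rightarrow> bool" where
  "lsc_fun g \<longleftrightarrow> (\<forall>x. g x \<le> Liminf (at x) g)"

definition dom_fun :: "('a \<Rightarrow> ereal) \<Rightarrow> 'a set" where
  "dom_fun g = {x. g x < \<infinity>}"

text \<open>Proximal operator: the (unique, under the standing assumptions) minimiser of
  alpha g(y) + 1/2 ||y - x||^2.\<close>
definition prox :: "real \<Rightarrow> ('a::real_normed_vector \<Rightarrow> ereal) \<Rightarrow> 'a \<Rightarrow> 'a" where
  "prox \<alpha> g x = (THE y. \<forall>z. ereal \<alpha> * g y + ereal ((norm (y - x))\<^sup>2 / 2)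
                              \<le> ereal \<alpha> * g z + ereal ((norm (z - x))\<^sup>2 / 2))"

text \<open>Operators F_1..F_M are indexed by 0..M-1 here.\<close>
definition avg_op :: "nat \<Rightarrow> (nat \<Rightarrow> 'a \<Rightarrow> 'a::real_vector) \<Rightarrow> 'a \<Rightarrow> 'a" where
  "avg_op M Fs x = (1 / real M) *\<^sub>R (\<Sum>m<M. Fs m x)"

definition monotone_op :: "('a::real_inner \<Rightarrow> 'a) \<Rightarrow> bool" where
  "monotone_op F \<longleftrightarrow> (\<forall>u v. (F u - F v) \<bullet> (u - v) \<ge> 0)"

definition VI_solution :: "('a::real_inner \<Rightarrow> 'a) \<Rightarrow> ('a \<Rightarrow> ereal) \<Rightarrow> 'a \<Rightarrow> bool" where
  "VI_solution F g xs \<longleftrightarrow> g xs < \<infinity> \<and>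
     (\<forall>x. ereal (F xs \<bullet> (x - xs)) + g x - g xs \<ge> 0)"

definition Gap :: "('a::real_inner \<Rightarrow> 'a) \<Rightarrow> ('a \<Rightarrow> ereal) \<Rightarrow> 'a set \<Rightarrow> 'a \<Rightarrow> ereal" where
  "Gap F g C z = (SUP u\<in>C. ereal (F u \<bullet> (z - u)) + g z - g u)"

text \<open>State (x^{k-1}, x^k, w^{k-1}, w^k). Randomness of iteration k: the list of the b sampled
  indices j^k_1..j^k_b and the coin deciding w^{k+1} = x^{k+1} (True, probability p).\<close>
type_synonym 'a omm_state = "'a \<times> 'a \<times> 'a \<times> 'a"

definition omm_step ::
  "nat \<Rightarrow> (nat \<Rightarrow> 'a \<Rightarrow> 'a::real_inner) \<Rightarrow> ('a \<Rightarrow> ereal) \<Rightarrow> real \<Rightarrow> real \<Rightarrow> nat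
   \<Rightarrow> 'a omm_state \<Rightarrow> nat list \<times> bool \<Rightarrow> 'a omm_state" where
  "omm_step M Fs g \<eta> \<gamma> b st \<omega> =
     (case st of (xp, x, wp, w) \<Rightarrow> case \<omega> of (S, c) \<Rightarrow>
       let \<Delta> = (1 / real b) *\<^sub>R (\<Sum>j\<leftarrow>S. (Fs j x - Fs j wp) + (Fs j x - Fs j xp))
               + avg_op M Fs wp;
           x' = prox \<eta> g (x + \<gamma> *\<^sub>R (w - x) - \<eta> *\<^sub>R \<Delta>);
           w' = (if c then x' else w)
       in (x, x', w, w'))"

primrec omm_iter ::
  "nat \<Rightarrow> (nat \<Rightarrow> 'a \<Rightarrow> 'a::real_inner) \<Rightarrow> ('a \<Rightarrow> ereal) \<Rightarrow> real \<Rightarrow> real \<Rightarrow> nat \<Rightarrow> 'a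
   \<Rightarrow> (nat list \<times> bool) list \<Rightarrow> nat \<Rightarrow> 'a omm_state" where
  "omm_iter M Fs g \<eta> \<gamma> b x0 \<omega>s 0 = (x0, x0, x0, x0)"
| "omm_iter M Fs g \<eta> \<gamma> b x0 \<omega>s (Suc k) =
     omm_step M Fs g \<eta> \<gamma> b (omm_iter M Fs g \<eta> \<gamma> b x0 \<omega>s k) (\<omega>s ! k)"

definition omm_x ::
  "nat \<Rightarrow> (nat \<Rightarrow> 'a \<Rightarrow> 'a::real_inner) \<Rightarrow> ('a \<Rightarrow> ereal) \<Rightarrow> real \<Rightarrow> real \<Rightarrow> nat \<Rightarrow> 'a
   \<Rightarrow> (nat list \<times> bool) list \<Rightarrow> nat \<Rightarrow> 'a" where
  "omm_x M Fs g \<eta> \<gamma> b x0 \<omega>s k = fst (snd (omm_iter M Fs g \<eta> \<gamma> b x0 \<omega>s k))"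

definition omm_samples :: "nat \<Rightarrow> nat \<Rightarrow> real \<Rightarrow> nat \<Rightarrow> (nat list \<times> bool) list pmf" where
  "omm_samples M b p K =
     replicate_pmf K (pair_pmf (replicate_pmf b (pmf_of_set {..<M})) (bernoulli_pmf p))"

definition omm_avg ::
  "nat \<Rightarrow> (nat \<Rightarrow> 'a \<Rightarrow> 'a::real_inner) \<Rightarrow> ('a \<Rightarrow> ereal) \<Rightarrow> real \<Rightarrow> real \<Rightarrow> nat \<Rightarrow> 'a
   \<Rightarrow> nat \<Rightarrow> (nat list \<times> bool) list \<Rightarrow> 'a" where
  "omm_avg M Fs g \<eta> \<gamma> b x0 K \<omega>s =
     (1 / real K) *\<^sub>R (\<Sum>k<K. omm_x M Fs g \<eta> \<gamma> b x0 \<omega>s (Suc k))"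

definition omm_expected_gap ::
  "nat \<Rightarrow> (nat \<Rightarrow> 'a \<Rightarrow> 'a::real_inner) \<Rightarrow> ('a \<Rightarrow> ereal) \<Rightarrow> real \<Rightarrow> real \<Rightarrow> real \<Rightarrow> nat \<Rightarrow> 'a
   \<Rightarrow> 'a set \<Rightarrow> nat \<Rightarrow> ereal" where
  "omm_expected_gap M Fs g \<eta> \<gamma> p b x0 C K =
     (\<Sum>\<omega>s\<in>set_pmf (omm_samples M b p K).
        ereal (pmf (omm_samples M b p K) \<omega>s) *
        Gap (avg_op M Fs) g C (omm_avg M Fs g \<eta> \<gamma> b x0 K \<omega>s))"

end

theory Submission
  imports Defs
begin

(* A stochastic Lyapunov argument. For every comparison point u, the prox step together with
   monotonicity and Lipschitz continuity of F gives the one-step inequality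

     eta (<F x^(k+1), x^(k+1) - u> + g x^(k+1) - g u) <= Psi_k u - Psi_(k+1) u + rho_k,

   where Psi_k >= 0 is a potential with Psi_0 u <= 2 |x^0 - u|^2. The errors of the mini-batch
   estimate of Delta^k and of the coin deciding w^(k+1) meet u only through inner products, which
   are moved into Psi_k by two ghost sequences; hence rho_k does not depend on u, and its conditional
   expectation is nonpositive because eta L <= 1/8 and eta^2 Lbar^2 <= gamma b / 64. Summing,
   using Jensen for the ergodic average and taking the supremum over u in C before the expectation
   gives E Gap <= 2 D^2 / (eta K); the complexity bound follows from
   1 / eta <= 8 Lbar / sqrt (p b) + 8 L. *)

section \<open>Proximal operator\<close>

lemma lsc_attains_min_on_compact:
  fixes \<phi> :: "'a::topological_space \<Rightarrow> ereal"
  assumes K: "compact K" "K \<noteq> {}"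
    and lsc: "\<And>x c. x \<in> K \<Longrightarrow> c < \<phi> x \<Longrightarrow> \<exists>U. open U \<and> x \<in> U \<and> (\<forall>y\<in>U\<inter>K. c < \<phi> y)"
  shows "\<exists>x\<in>K. \<forall>y\<in>K. \<phi> x \<le> \<phi> y"
proof (rule ccontr)
  assume nex: "\<not> ?thesis"
  define \<iota> where "\<iota> = (INF y\<in>K. \<phi> y)"
  have lt: "\<iota> < \<phi> x" if "x \<in> K" for x
  proof -
    from nex that obtain y where "y \<in> K" "\<phi> y < \<phi> x" by (auto simp: not_le)
    moreover have "\<iota> \<le> \<phi> y" unfolding \<iota>_def using \<open>y\<in>K\<close> by (rule INF_lower)
    ultimately show ?thesis by simp
  qed
  have "\<forall>x\<in>K. \<exists>c U. \<iota> < c \<and> open U \<and> x \<in> U \<and> (\<forall>y\<in>U\<inter>K. c < \<phi> y)"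
  proof
    fix x assume x: "x \<in> K"
    obtain c where c: "\<iota> < ereal c" "ereal c < \<phi> x" using ereal_dense2[OF lt[OF x]] by blast
    obtain U where "open U \<and> x \<in> U \<and> (\<forall>y\<in>U\<inter>K. ereal c < \<phi> y)" using lsc[OF x c(2)] by blast
    with c show "\<exists>c U. \<iota> < c \<and> open U \<and> x \<in> U \<and> (\<forall>y\<in>U\<inter>K. c < \<phi> y)" by blast
  qed
  then obtain c U where cU: "\<And>x. x \<in> K \<Longrightarrow> \<iota> < c x \<and> open (U x) \<and> x \<in> U x \<and> (\<forall>y\<in>U x\<inter>K. c x < \<phi> y)"
    by metis
  obtain K' where K': "K' \<subseteq> K" "finite K'" "K \<subseteq> (\<Union>x\<in>K'. U x)"
    by (rule compactE_image[OF K(1), of K U]) (use cU in auto)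
  have "K' \<noteq> {}" using K' K(2) by auto
  define m where "m = Min (c ` K')"
  have m_gt: "\<iota> < m" unfolding m_def using K' \<open>K' \<noteq> {}\<close> cU by (subst Min_gr_iff) auto
  have "m \<le> \<phi> y" if "y \<in> K" for y
  proof -
    from K'(3) that obtain x where x: "x \<in> K'" "y \<in> U x" by auto
    have "m \<le> c x" unfolding m_def using x K' by (intro Min_le) auto
    also have "c x < \<phi> y" using cU[of x] x K' that by auto
    finally show ?thesis by simp
  qed
  hence "m \<le> \<iota>" unfolding \<iota>_def by (rule INF_greatest)
  with m_gt show False by simp
qed

lemma lsc_fun_imp_open_nbhd_gt:
  fixes g :: "'a::topological_space \<Rightarrow> ereal"
  assumes "lsc_fun g" "c < g x"
  shows "\<exists>U. open U \<and> x \<in> U \<and> (\<forall>y\<in>U. c < g y)"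
proof -
  have "c < Liminf (at x) g" using assms unfolding lsc_fun_def by (meson less_le_trans)
  hence "eventually (\<lambda>y. c < g y) (at x)" by (rule less_LiminfD)
  then obtain S where "open S" "x \<in> S" "\<forall>y\<in>S. y \<noteq> x \<longrightarrow> c < g y"
    unfolding eventually_at_topological by auto
  with assms(2) show ?thesis by (intro exI[of _ S]) auto
qed

lemma ereal_scaled_add_gt:
  assumes "ereal c1 < G" "\<eta> > 0" "qx - \<epsilon> < qy" "\<eta> * c1 + qx - \<epsilon> \<ge> c0"
  shows "ereal c0 < ereal \<eta> * G + ereal qy"
proof (cases G)
  case (real r)
  with assms have "\<eta> * c1 < \<eta> * r" by simp
  thus ?thesis using real assms(3,4) by simp
qed (use assms in auto)

lemma norm_midpoint_diff_sq:
  fixes y1 y2 v :: "'a::real_inner"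
  shows "(norm ((1 - 1/2) *\<^sub>R y1 + (1/2) *\<^sub>R y2 - v))\<^sup>2
         = ((norm (y1 - v))\<^sup>2 + (norm (y2 - v))\<^sup>2) / 2 - (norm (y1 - y2))\<^sup>2 / 4"
  unfolding power2_norm_eq_inner by (simp add: inner_simps inner_commute algebra_simps) (simp add: field_simps)

lemma norm_sq_le_SUP_compact:
  fixes x0 :: "'a::real_normed_vector"
  assumes "compact C" "u \<in> C"
  shows "(norm (x0 - u))\<^sup>2 \<le> (SUP x\<in>C. (norm (x0 - x))\<^sup>2)"
proof -
  have "compact ((\<lambda>x. (norm (x0 - x))\<^sup>2) ` C)"
    using assms(1) by (intro compact_continuous_image continuous_intros)
  hence "bdd_above ((\<lambda>x. (norm (x0 - x))\<^sup>2) ` C)" by (intro bounded_imp_bdd_above compact_imp_bounded)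
  thus ?thesis by (rule cSUP_upper[OF assms(2)])
qed

locale proper_convex_lsc =
  fixes g :: "'a::euclidean_space \<Rightarrow> ereal"
  assumes proper: "proper_fun g" and convex: "ereal_convex g" and lsc: "lsc_fun g"
begin

lemma not_MInf [simp]: "g x \<noteq> -\<infinity>"
  using proper unfolding proper_fun_def by auto

lemma dom_nonempty: "\<exists>y. g y < \<infinity>"
  using proper unfolding proper_fun_def by (auto simp: less_top)

lemma convex_comb_le:
  "0 \<le> t \<Longrightarrow> t \<le> 1 \<Longrightarrow> g ((1 - t) *\<^sub>R x + t *\<^sub>R y) \<le> ereal (1 - t) * g x + ereal t * g y"
  using convex unfolding ereal_convex_def by blast

lemma convex_comb_le_real:
  assumes "0 \<le> t" "t \<le> 1" "g x = ereal a" "g y = ereal c"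
  shows "g ((1 - t) *\<^sub>R x + t *\<^sub>R y) \<le> ereal ((1 - t) * a + t * c)"
  using convex_comb_le[OF assms(1,2), of x y] assms(3,4) by simp

lemma convex_avg_le:
  fixes y :: "nat \<Rightarrow> 'a" and a :: "nat \<Rightarrow> real"
  assumes ga: "\<And>k. g (y k) = ereal (a k)" and n: "n \<ge> 1"
  shows "g ((1 / real n) *\<^sub>R (\<Sum>k<n. y k)) \<le> ereal ((1 / real n) * (\<Sum>k<n. a k))"
  using n
proof (induction n rule: nat_induct_at_least)
  case base thus ?case using ga[of 0] by simp
next
  case (Suc n)
  define t where "t = 1 / real (Suc n)"
  have t: "0 \<le> t" "t \<le> 1" by (auto simp: t_def)
  have split: "(1 / real (Suc n)) *\<^sub>R (\<Sum>k<Suc n. y k) = (1 - t) *\<^sub>R ((1 / real n) *\<^sub>R (\<Sum>k<n. y k)) + t *\<^sub>R y n"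
    using Suc.hyps by (simp add: t_def scaleR_add_right field_simps)
  have "g ((1 / real (Suc n)) *\<^sub>R (\<Sum>k<Suc n. y k))
      \<le> ereal (1 - t) * g ((1 / real n) *\<^sub>R (\<Sum>k<n. y k)) + ereal t * g (y n)"
    unfolding split by (rule convex_comb_le[OF t])
  also have "\<dots> \<le> ereal (1 - t) * ereal ((1 / real n) * (\<Sum>k<n. a k)) + ereal t * ereal (a n)"
    using t by (intro add_mono ereal_mult_left_mono Suc.IH) (auto simp: ga)
  also have "\<dots> = ereal ((1 / real (Suc n)) * (\<Sum>k<Suc n. a k))"
  proof -
    have "1 - t = real n / real (Suc n)" by (simp add: t_def field_simps)
    hence "(1 - t) * ((1 / real n) * (\<Sum>k<n. a k)) = (\<Sum>k<n. a k) / real (Suc n)"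
      using Suc.hyps by simp
    thus ?thesis by (simp add: t_def add_divide_distrib)
  qed
  finally show ?case .
qed

lemma ge_outside_unit_ball:
  assumes g0: "g y0 = ereal g0" and sphere: "\<And>z. norm (z - y0) = 1 \<Longrightarrow> ereal m \<le> g z"
    and far: "norm (y - y0) > 1"
  shows "ereal (g0 - (g0 - m) * norm (y - y0)) \<le> g y"
proof -
  define n where "n = norm (y - y0)"
  have n: "n > 1" using far by (simp add: n_def)
  define t where "t = 1 / n"
  have t: "0 \<le> t" "t \<le> 1" using n by (auto simp: t_def)
  define z where "z = (1 - t) *\<^sub>R y0 + t *\<^sub>R y"
  have "z - y0 = t *\<^sub>R (y - y0)" by (simp add: z_def algebra_simps)
  moreover have "y \<noteq> y0" using far by auto
  ultimately have "norm (z - y0) = 1" by (simp add: t_def n_def)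
  hence "ereal m \<le> g z" by (rule sphere)
  also have "\<dots> \<le> ereal (1 - t) * g y0 + ereal t * g y"
    unfolding z_def by (rule convex_comb_le[OF t])
  finally have ineq: "ereal m \<le> ereal (1 - t) * ereal g0 + ereal t * g y" using g0 by simp
  show ?thesis
  proof (cases "g y")
    case (real gy)
    with ineq have "m - (1 - t) * g0 \<le> t * gy" by simp
    hence "(m - (1 - t) * g0) * n \<le> gy" using n t by (simp add: t_def field_simps)
    moreover have "(m - (1 - t) * g0) * n = g0 - (g0 - m) * n"
      using n by (simp add: t_def field_simps)
    ultimately show ?thesis using real by (simp add: n_def)
  qed auto
qed

lemma minorant_cone:
  obtains y0 A B where "g y0 < \<infinity>" "B \<ge> 0" "\<And>y. ereal (A - B * norm (y - y0)) \<le> g y"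
proof -
  obtain y0 where y0: "g y0 \<noteq> \<infinity>" using proper unfolding proper_fun_def by auto
  then obtain g0 where g0: "g y0 = ereal g0" using not_MInf[of y0] by (cases "g y0") auto
  obtain xm where xm: "xm \<in> cball y0 1" "\<And>y. y \<in> cball y0 1 \<Longrightarrow> g xm \<le> g y"
    using lsc_attains_min_on_compact[of "cball y0 1" g] lsc_fun_imp_open_nbhd_gt[OF lsc] by fastforce
  have "g xm \<le> g y0" using xm by auto
  then obtain m where m: "g xm = ereal m" using g0 not_MInf[of xm] by (cases "g xm") auto
  have "m \<le> g0" using \<open>g xm \<le> g y0\<close> m g0 by simp
  have near: "ereal m \<le> g y" if "norm (y - y0) \<le> 1" for y
    using xm(2)[of y] that m by (simp add: dist_norm norm_minus_commute)
  have "ereal (m - (g0 - m) * norm (y - y0)) \<le> g y" for y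
  proof (cases "norm (y - y0) \<le> 1")
    case True
    have "m - (g0 - m) * norm (y - y0) \<le> m" using \<open>m \<le> g0\<close> by simp
    thus ?thesis using near[OF True] by (metis ereal_less_eq(3) order.trans)
  next
    case False
    have "m - (g0 - m) * norm (y - y0) \<le> g0 - (g0 - m) * norm (y - y0)" using \<open>m \<le> g0\<close> by simp
    moreover have "ereal (g0 - (g0 - m) * norm (y - y0)) \<le> g y"
      using False near by (intro ge_outside_unit_ball[OF g0]) auto
    ultimately show ?thesis by (metis ereal_less_eq(3) order.trans)
  qed
  moreover have "g y0 < \<infinity>" using g0 by simp
  ultimately show ?thesis using that \<open>m \<le> g0\<close> by (metis diff_ge_0_iff_ge)
qed

definition prox_obj :: "real \<Rightarrow> 'a \<Rightarrow> 'a \<Rightarrow> ereal" where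
  "prox_obj \<eta> v y = ereal \<eta> * g y + ereal ((norm (y - v))\<^sup>2 / 2)"

lemma prox_obj_open_nbhd_gt:
  assumes "\<eta> > 0" "c < prox_obj \<eta> v x"
  shows "\<exists>U. open U \<and> x \<in> U \<and> (\<forall>y\<in>U. c < prox_obj \<eta> v y)"
proof -
  define q where "q y = (norm (y - v))\<^sup>2 / 2" for y
  obtain c0 where c0: "c < ereal c0" "ereal c0 < prox_obj \<eta> v x"
    using ereal_dense2[OF assms(2)] by blast
  have "\<exists>c1 \<epsilon>. ereal c1 < g x \<and> \<epsilon> > 0 \<and> \<eta> * c1 + q x - \<epsilon> \<ge> c0"
  proof (cases "g x")
    case (real gx)
    define \<epsilon> where "\<epsilon> = (\<eta> * gx + q x - c0) / 3"
    have "c0 < \<eta> * gx + q x" using c0(2) real by (simp add: prox_obj_def q_def)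
    hence e: "\<epsilon> > 0" by (simp add: \<epsilon>_def)
    have "\<eta> * (gx - \<epsilon> / \<eta>) + q x - \<epsilon> = c0 + \<epsilon>"
      using assms(1) by (simp add: \<epsilon>_def field_simps)
    moreover have "gx - \<epsilon> / \<eta> < gx" using e assms(1) by simp
    ultimately show ?thesis using e real by (intro exI[of _ "gx - \<epsilon> / \<eta>"] exI[of _ \<epsilon>]) auto
  next
    case PInf
    show ?thesis
      by (rule exI[of _ "(c0 - q x + 1) / \<eta>"], rule exI[of _ 1]) (use PInf assms(1) in auto)
  qed auto
  then obtain c1 \<epsilon> where ce: "ereal c1 < g x" "\<epsilon> > 0" "\<eta> * c1 + q x - \<epsilon> \<ge> c0" by blast
  obtain U1 where U1: "open U1" "x \<in> U1" "\<forall>y\<in>U1. ereal c1 < g y"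
    using lsc_fun_imp_open_nbhd_gt[OF lsc ce(1)] by blast
  define U2 where "U2 = {y. q x - \<epsilon> < q y}"
  have "open U2" unfolding U2_def q_def by (intro open_Collect_less continuous_intros) simp_all
  moreover have "x \<in> U2" using ce by (simp add: U2_def)
  moreover have "c < prox_obj \<eta> v y" if "y \<in> U1 \<inter> U2" for y
  proof -
    have "ereal c0 < ereal \<eta> * g y + ereal (q y)"
      by (rule ereal_scaled_add_gt[OF _ assms(1) _ ce(3)]) (use that U1 in \<open>auto simp: U2_def\<close>)
    thus ?thesis using c0(1) by (simp add: prox_obj_def q_def)
  qed
  ultimately show ?thesis using U1 by (intro exI[of _ "U1 \<inter> U2"]) auto
qed

lemma prox_obj_coercive:
  assumes "\<eta> > 0"
  obtains y0 R where "y0 \<in> cball v R" "\<And>z. norm (z - v) > R \<Longrightarrow> prox_obj \<eta> v y0 < prox_obj \<eta> v z"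
proof -
  obtain y0 A B where y0: "g y0 < \<infinity>" "B \<ge> 0" "\<And>y. ereal (A - B * norm (y - y0)) \<le> g y"
    by (rule minorant_cone) blast
  then obtain g0 where g0: "g y0 = ereal g0" using not_MInf[of y0] by (cases "g y0") auto
  define f0 where "f0 = \<eta> * g0 + (norm (y0 - v))\<^sup>2 / 2"
  have f0: "prox_obj \<eta> v y0 = ereal f0" using g0 by (simp add: prox_obj_def f0_def)
  define K0 where "K0 = \<eta> * B * norm (v - y0) - \<eta> * A + f0"
  define R where "R = 2 * \<eta> * B + \<bar>K0\<bar> + 2 + norm (y0 - v)"
  have \<eta>B: "\<eta> * B \<ge> 0" using assms y0(2) by simp
  have "prox_obj \<eta> v y0 < prox_obj \<eta> v z" if z: "norm (z - v) > R" for z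
  proof -
    define s where "s = norm (z - v)"
    have s: "s > R" using z by (simp add: s_def)
    have "norm (z - y0) \<le> s + norm (v - y0)"
      unfolding s_def using norm_triangle_ineq[of "z - v" "v - y0"] by simp
    hence lb: "A - B * (s + norm (v - y0)) \<le> A - B * norm (z - y0)"
      using y0(2) by (simp add: mult_left_mono)
    have "s / 2 - \<eta> * B \<ge> 1"
      using s abs_ge_zero[of K0] norm_ge_zero[of "y0 - v"] unfolding R_def by linarith
    moreover have "s \<ge> 0" unfolding s_def by simp
    ultimately have "s * (s / 2 - \<eta> * B) \<ge> s" using mult_left_mono[of 1 _ s] by simp
    moreover have "s > K0"
      using s \<eta>B abs_ge_self[of K0] norm_ge_zero[of "y0 - v"] unfolding R_def by linarith
    ultimately have "s * (s / 2 - \<eta> * B) > K0" by linarith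
    moreover have "\<eta> * (A - B * (s + norm (v - y0))) + s\<^sup>2 / 2 = s * (s / 2 - \<eta> * B) - K0 + f0"
      by (simp add: K0_def power2_eq_square algebra_simps)
    ultimately have "f0 < \<eta> * (A - B * (s + norm (v - y0))) + s\<^sup>2 / 2" by linarith
    also have "\<dots> \<le> \<eta> * (A - B * norm (z - y0)) + s\<^sup>2 / 2" using lb assms by simp
    finally have "ereal f0 < ereal \<eta> * ereal (A - B * norm (z - y0)) + ereal ((norm (z - v))\<^sup>2 / 2)"
      by (simp add: s_def)
    also have "\<dots> \<le> prox_obj \<eta> v z"
      unfolding prox_obj_def using y0(3)[of z] assms by (intro add_right_mono ereal_mult_left_mono) auto
    finally show ?thesis using f0 by simp
  qed
  moreover have "y0 \<in> cball v R" unfolding mem_cball dist_norm R_def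
    using norm_minus_commute[of v y0] abs_ge_zero[of K0] \<eta>B by linarith
  ultimately show ?thesis using that by blast
qed

lemma prox_obj_has_min:
  assumes "\<eta> > 0"
  shows "\<exists>y. \<forall>z. prox_obj \<eta> v y \<le> prox_obj \<eta> v z"
proof -
  obtain y0 R where y0: "y0 \<in> cball v R"
    and far: "\<And>z. norm (z - v) > R \<Longrightarrow> prox_obj \<eta> v y0 < prox_obj \<eta> v z"
    by (rule prox_obj_coercive[OF assms]) blast
  have "\<exists>x\<in>cball v R. \<forall>y\<in>cball v R. prox_obj \<eta> v x \<le> prox_obj \<eta> v y"
  proof (rule lsc_attains_min_on_compact)
    show "compact (cball v R)" by simp
    show "cball v R \<noteq> {}" using y0 by blast
    fix x c assume "c < prox_obj \<eta> v x"
    then obtain U where "open U" "x \<in> U" "\<forall>y\<in>U. c < prox_obj \<eta> v y"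
      using prox_obj_open_nbhd_gt[OF assms] by blast
    thus "\<exists>U. open U \<and> x \<in> U \<and> (\<forall>y\<in>U \<inter> cball v R. c < prox_obj \<eta> v y)" by blast
  qed
  then obtain x where x: "x \<in> cball v R" "\<And>y. y \<in> cball v R \<Longrightarrow> prox_obj \<eta> v x \<le> prox_obj \<eta> v y"
    by blast
  have "prox_obj \<eta> v x \<le> prox_obj \<eta> v z" for z
  proof (cases "z \<in> cball v R")
    case False
    hence "prox_obj \<eta> v y0 < prox_obj \<eta> v z"
      by (intro far) (simp add: dist_norm norm_minus_commute)
    thus ?thesis using x(2)[OF y0] by simp
  qed (use x in auto)
  thus ?thesis by blast
qed

lemma prox_obj_min_in_dom:
  assumes "\<eta> > 0" "\<forall>z. prox_obj \<eta> v y \<le> prox_obj \<eta> v z"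
  shows "g y < \<infinity>"
proof (rule ccontr)
  assume "\<not> g y < \<infinity>"
  hence "prox_obj \<eta> v y = \<infinity>" using assms(1) by (simp add: prox_obj_def)
  moreover obtain y0 where "g y0 < \<infinity>" using dom_nonempty by blast
  then obtain a where "g y0 = ereal a" using not_MInf[of y0] by (cases "g y0") auto
  hence "prox_obj \<eta> v y0 < \<infinity>" by (simp add: prox_obj_def)
  ultimately show False using assms(2) by (metis not_le)
qed

lemma prox_obj_min_unique:
  assumes "\<eta> > 0" "\<forall>z. prox_obj \<eta> v y1 \<le> prox_obj \<eta> v z" "\<forall>z. prox_obj \<eta> v y2 \<le> prox_obj \<eta> v z"
  shows "y1 = y2"
proof -
  obtain a1 where a1: "g y1 = ereal a1"
    using prox_obj_min_in_dom[OF assms(1,2)] not_MInf[of y1] by (cases "g y1") auto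
  obtain a2 where a2: "g y2 = ereal a2"
    using prox_obj_min_in_dom[OF assms(1,3)] not_MInf[of y2] by (cases "g y2") auto
  define q where "q y = (norm (y - v))\<^sup>2 / 2" for y
  have eq: "\<eta> * a1 + q y1 = \<eta> * a2 + q y2"
    using assms(2)[rule_format, of y2] assms(3)[rule_format, of y1] a1 a2
    by (simp add: prox_obj_def q_def)
  define z where "z = (1 - 1/2) *\<^sub>R y1 + (1/2::real) *\<^sub>R y2"
  have "ereal \<eta> * g z \<le> ereal \<eta> * ereal ((1 - 1/2) * a1 + (1/2) * a2)"
    unfolding z_def using a1 a2 assms(1) by (intro ereal_mult_left_mono convex_comb_le_real) auto
  from add_right_mono[OF this, of "ereal (q z)"]
  have "prox_obj \<eta> v z \<le> ereal (\<eta> * ((1 - 1/2) * a1 + (1/2) * a2) + q z)"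
    unfolding prox_obj_def q_def by simp
  with assms(2) have "prox_obj \<eta> v y1 \<le> ereal (\<eta> * ((1 - 1/2) * a1 + (1/2) * a2) + q z)"
    using order_trans by blast
  hence le: "\<eta> * a1 + q y1 \<le> \<eta> * ((1 - 1/2) * a1 + (1/2) * a2) + q z"
    using a1 by (simp add: prox_obj_def q_def)
  define n where "n = (norm (y1 - y2))\<^sup>2"
  have "q z = (q y1 + q y2) / 2 - n / 8"
    unfolding q_def z_def n_def norm_midpoint_diff_sq by simp
  with le eq have "n \<le> 0" by (simp add: field_simps)
  thus ?thesis by (simp add: n_def)
qed

lemma prox_minimizes:
  assumes "\<eta> > 0"
  shows "\<forall>z. prox_obj \<eta> v (prox \<eta> g v) \<le> prox_obj \<eta> v z"
proof -
  have "\<exists>!y. \<forall>z. prox_obj \<eta> v y \<le> prox_obj \<eta> v z"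
    using prox_obj_has_min[OF assms] prox_obj_min_unique[OF assms] by blast
  thus ?thesis unfolding prox_def prox_obj_def[symmetric] by (rule theI')
qed

lemma prox_finite_value:
  assumes "\<eta> > 0" shows "g (prox \<eta> g v) = ereal (real_of_ereal (g (prox \<eta> g v)))"
proof -
  have "g (prox \<eta> g v) < \<infinity>" using prox_obj_min_in_dom[OF assms prox_minimizes[OF assms]] .
  thus ?thesis using not_MInf by (cases "g (prox \<eta> g v)") auto
qed

lemma prox_segment_ineq:
  fixes v u :: 'a
  assumes "\<eta> > 0" "g u = ereal gu" "0 < t" "t \<le> 1"
  defines "y \<equiv> prox \<eta> g v"
  shows "0 \<le> \<eta> * (gu - real_of_ereal (g y)) - inner (v - y) (u - y) + t * (norm (u - y))\<^sup>2 / 2"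
proof -
  define gy where "gy = real_of_ereal (g y)"
  have gy: "g y = ereal gy" using prox_finite_value[OF assms(1)] by (simp add: y_def gy_def)
  define z where "z = (1 - t) *\<^sub>R y + t *\<^sub>R u"
  have "ereal \<eta> * g z \<le> ereal \<eta> * ereal ((1 - t) * gy + t * gu)"
    unfolding z_def using assms gy by (intro ereal_mult_left_mono convex_comb_le_real) auto
  from add_right_mono[OF this, of "ereal ((norm (z - v))\<^sup>2 / 2)"]
  have "prox_obj \<eta> v z \<le> ereal (\<eta> * ((1 - t) * gy + t * gu) + (norm (z - v))\<^sup>2 / 2)"
    unfolding prox_obj_def by simp
  moreover have "prox_obj \<eta> v y \<le> prox_obj \<eta> v z"
    using prox_minimizes[OF assms(1)] by (simp add: y_def)
  ultimately have "prox_obj \<eta> v y \<le> ereal (\<eta> * ((1 - t) * gy + t * gu) + (norm (z - v))\<^sup>2 / 2)"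
    by (rule order_trans[rotated])
  hence "\<eta> * gy + (norm (y - v))\<^sup>2 / 2 \<le> \<eta> * ((1 - t) * gy + t * gu) + (norm (z - v))\<^sup>2 / 2"
    using gy by (simp add: prox_obj_def)
  moreover have "(norm (z - v))\<^sup>2
      = (norm (y - v))\<^sup>2 + 2 * t * inner (y - v) (u - y) + t\<^sup>2 * (norm (u - y))\<^sup>2"
  proof -
    have zv: "z - v = (y - v) + t *\<^sub>R (u - y)" by (simp add: z_def algebra_simps)
    show ?thesis unfolding zv power2_norm_eq_inner
      by (simp add: inner_simps inner_commute algebra_simps power2_eq_square)
  qed
  ultimately have "0 \<le> t * (\<eta> * (gu - gy) - inner (v - y) (u - y) + t * (norm (u - y))\<^sup>2 / 2)"
    by (simp add: inner_diff_left algebra_simps power2_eq_square)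
  thus ?thesis using assms(3) by (simp add: gy_def zero_le_mult_iff)
qed

text \<open>Letting \<open>t \<rightarrow> 0\<close> in the previous lemma.\<close>
lemma prox_variational_ineq:
  fixes v u :: 'a
  assumes "\<eta> > 0" "g u = ereal gu"
  defines "y \<equiv> prox \<eta> g v"
  shows "\<eta> * real_of_ereal (g y) + inner (v - y) (u - y) \<le> \<eta> * gu"
proof -
  define \<delta> where "\<delta> = \<eta> * (gu - real_of_ereal (g y)) - inner (v - y) (u - y)"
  define N where "N = (norm (u - y))\<^sup>2"
  have segment: "0 \<le> \<delta> + t * N / 2" if "0 < t" "t \<le> 1" for t
    using prox_segment_ineq[OF assms(1,2) that, of v] unfolding \<delta>_def N_def y_def .
  have "\<delta> \<ge> 0"
  proof (rule ccontr)
    assume neg: "\<not> \<delta> \<ge> 0"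
    show False
    proof (cases "N = 0")
      case True thus False using segment[of 1] neg by simp
    next
      case False
      hence Np: "N > 0" by (simp add: N_def)
      define t where "t = min 1 (- \<delta> / N)"
      have "- \<delta> / N > 0" using neg Np by (intro divide_pos_pos) auto
      hence t: "0 < t" "t \<le> 1" by (auto simp: t_def)
      have "t * N \<le> - \<delta>" using Np by (simp add: t_def min_def field_simps)
      thus False using segment[OF t] neg by linarith
    qed
  qed
  thus ?thesis unfolding \<delta>_def by (simp add: algebra_simps)
qed

lemma prox_nonexpansive:
  assumes "\<eta> > 0"
  shows "norm (prox \<eta> g v1 - prox \<eta> g v2) \<le> norm (v1 - v2)"
proof -
  define y1 where "y1 = prox \<eta> g v1"
  define y2 where "y2 = prox \<eta> g v2"
  have "\<eta> * real_of_ereal (g y1) + inner (v1 - y1) (y2 - y1) \<le> \<eta> * real_of_ereal (g y2)"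
    using prox_variational_ineq[OF assms prox_finite_value[OF assms, of v2], of v1] by (simp add: y1_def y2_def)
  moreover have "\<eta> * real_of_ereal (g y2) + inner (v2 - y2) (y1 - y2) \<le> \<eta> * real_of_ereal (g y1)"
    using prox_variational_ineq[OF assms prox_finite_value[OF assms, of v1], of v2] by (simp add: y1_def y2_def)
  moreover have "inner (v1 - y1) (y2 - y1) + inner (v2 - y2) (y1 - y2)
      = (norm (y1 - y2))\<^sup>2 - inner (v1 - v2) (y1 - y2)"
    unfolding power2_norm_eq_inner by (simp add: inner_simps inner_commute algebra_simps)
  ultimately have "(norm (y1 - y2))\<^sup>2 \<le> inner (v1 - v2) (y1 - y2)" by linarith
  also have "\<dots> \<le> norm (v1 - v2) * norm (y1 - y2)" by (rule norm_cauchy_schwarz)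
  finally have "norm (y1 - y2) * norm (y1 - y2) \<le> norm (v1 - v2) * norm (y1 - y2)"
    by (simp add: power2_eq_square)
  thus ?thesis unfolding y1_def[symmetric] y2_def[symmetric]
    by (cases "y1 = y2") (simp_all add: mult_le_cancel_right_pos)
qed

end

section \<open>Expectations over finite distributions\<close>

lemma finite_set_replicate_pmf:
  assumes "finite (set_pmf p)" shows "finite (set_pmf (replicate_pmf n p))"
proof -
  have "set_pmf (replicate_pmf n p) = {xs. set xs \<subseteq> set_pmf p \<and> length xs = n}"
    by (auto simp: set_replicate_pmf)
  thus ?thesis using finite_lists_length_eq[OF assms] by simp
qed

lemma finite_set_bernoulli_pmf: "finite (set_pmf (bernoulli_pmf p))"
  by (rule finite_subset[of _ UNIV]) auto

lemma expectation_finite_pmf: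
  fixes f :: "'b \<Rightarrow> real"
  assumes "finite (set_pmf p)"
  shows "measure_pmf.expectation p f = (\<Sum>a\<in>set_pmf p. pmf p a * f a)"
  using integral_measure_pmf[OF assms, of p f] by simp

lemma expectation_finite_pmf_mono:
  fixes f h :: "'b \<Rightarrow> real"
  assumes "finite (set_pmf p)" "\<And>x. x \<in> set_pmf p \<Longrightarrow> f x \<le> h x"
  shows "measure_pmf.expectation p f \<le> measure_pmf.expectation p h"
  unfolding expectation_finite_pmf[OF assms(1)] using assms(2)
  by (intro sum_mono mult_left_mono) auto

lemma expectation_finite_pmf_cong:
  fixes f h :: "'b \<Rightarrow> real"
  assumes "finite (set_pmf p)" "\<And>x. x \<in> set_pmf p \<Longrightarrow> f x = h x"
  shows "measure_pmf.expectation p f = measure_pmf.expectation p h"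
  unfolding expectation_finite_pmf[OF assms(1)] using assms(2) by (intro sum.cong) auto

lemma expectation_finite_pmf_affine:
  fixes f h :: "'b \<Rightarrow> real"
  assumes "finite (set_pmf p)"
  shows "measure_pmf.expectation p (\<lambda>x. a * f x + c * h x + k) =
     a * measure_pmf.expectation p f + c * measure_pmf.expectation p h + k"
proof -
  have "(\<Sum>x\<in>set_pmf p. k * pmf p x) = k"
    using sum_pmf_eq_1[OF assms, of p] by (simp add: sum_distrib_left[symmetric])
  thus ?thesis unfolding expectation_finite_pmf[OF assms]
    by (simp add: sum.distrib sum_distrib_left algebra_simps)
qed

lemma expectation_finite_pmf_add:
  fixes f h :: "'b \<Rightarrow> real"
  assumes "finite (set_pmf p)"
  shows "measure_pmf.expectation p (\<lambda>x. f x + h x) = measure_pmf.expectation p f + measure_pmf.expectation p h"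
  using expectation_finite_pmf_affine[OF assms, of 1 f 1 h 0] by simp

lemma expectation_finite_pmf_sum:
  fixes f :: "nat \<Rightarrow> 'b \<Rightarrow> real"
  assumes "finite (set_pmf p)"
  shows "measure_pmf.expectation p (\<lambda>x. \<Sum>k<K. f k x) = (\<Sum>k<K. measure_pmf.expectation p (f k))"
  unfolding expectation_finite_pmf[OF assms] by (simp add: sum_distrib_left sum.swap[of _ "{..<K}"])

lemma expectation_finite_pmf_swap:
  fixes f :: "'b \<Rightarrow> 'c \<Rightarrow> real"
  assumes "finite (set_pmf p)" "finite (set_pmf q)"
  shows "measure_pmf.expectation p (\<lambda>x. measure_pmf.expectation q (\<lambda>y. f x y)) =
         measure_pmf.expectation q (\<lambda>y. measure_pmf.expectation p (\<lambda>x. f x y))"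
  unfolding expectation_finite_pmf[OF assms(1)] expectation_finite_pmf[OF assms(2)]
  by (simp add: sum_distrib_left sum.swap[of _ "set_pmf p"] algebra_simps)

lemma expectation_bind_finite_pmf:
  fixes h :: "'b \<Rightarrow> real"
  assumes "finite (set_pmf p)" "\<And>x. x \<in> set_pmf p \<Longrightarrow> finite (set_pmf (f x))"
  shows "measure_pmf.expectation (p \<bind> f) h = measure_pmf.expectation p (\<lambda>x. measure_pmf.expectation (f x) h)"
proof -
  have "measure_pmf.expectation (p \<bind> f) h = (\<Sum>a\<in>set_pmf p. pmf p a *\<^sub>R measure_pmf.expectation (f a) h)"
    using assms by (intro pmf_expectation_bind) auto
  also have "\<dots> = measure_pmf.expectation p (\<lambda>x. measure_pmf.expectation (f x) h)"
    using assms by (intro integral_measure_pmf[symmetric]) auto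
  finally show ?thesis .
qed

lemma expectation_pair_finite_pmf:
  fixes f :: "'b \<times> 'c \<Rightarrow> real"
  assumes "finite (set_pmf A)" "finite (set_pmf B)"
  shows "measure_pmf.expectation (pair_pmf A B) f =
     measure_pmf.expectation A (\<lambda>a. measure_pmf.expectation B (\<lambda>b. f (a, b)))"
  unfolding pair_pmf_def using assms by (simp add: expectation_bind_finite_pmf)

lemma expectation_replicate_pmf_Suc:
  fixes f :: "'b list \<Rightarrow> real"
  assumes "finite (set_pmf p)"
  shows "measure_pmf.expectation (replicate_pmf (Suc n) p) f =
     measure_pmf.expectation p (\<lambda>x. measure_pmf.expectation (replicate_pmf n p) (\<lambda>xs. f (x # xs)))"
  using assms finite_set_replicate_pmf[OF assms] by (simp add: expectation_bind_finite_pmf)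

lemma expectation_replicate_pmf_prefix_nth:
  fixes \<phi> :: "'b list \<Rightarrow> 'b \<Rightarrow> real"
  assumes fq: "finite (set_pmf q)" and "k < K"
  shows "measure_pmf.expectation (replicate_pmf K q) (\<lambda>\<omega>s. \<phi> (take k \<omega>s) (\<omega>s ! k))
       = measure_pmf.expectation (replicate_pmf k q) (\<lambda>pre. measure_pmf.expectation q (\<phi> pre))"
proof -
  obtain m where K: "K = k + Suc m" using \<open>k < K\<close> by (metis add_Suc_right less_iff_Suc_add)
  have fk: "finite (set_pmf (replicate_pmf k q))" by (rule finite_set_replicate_pmf[OF fq])
  have fSm: "finite (set_pmf (replicate_pmf (Suc m) q))" by (rule finite_set_replicate_pmf[OF fq])
  have "measure_pmf.expectation (replicate_pmf K q) (\<lambda>\<omega>s. \<phi> (take k \<omega>s) (\<omega>s ! k))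
     = measure_pmf.expectation (replicate_pmf k q) (\<lambda>pre. measure_pmf.expectation (replicate_pmf (Suc m) q)
          (\<lambda>ys. \<phi> (take k (pre @ ys)) ((pre @ ys) ! k)))"
    unfolding K replicate_pmf_distrib map_pmf_def[symmetric] using fk fSm
    by (subst expectation_bind_finite_pmf) simp_all
  also have "\<dots> = measure_pmf.expectation (replicate_pmf k q) (\<lambda>pre. measure_pmf.expectation q (\<phi> pre))"
  proof (rule expectation_finite_pmf_cong[OF fk])
    fix pre assume "pre \<in> set_pmf (replicate_pmf k q)"
    hence len: "length pre = k" by (simp add: set_replicate_pmf)
    show "measure_pmf.expectation (replicate_pmf (Suc m) q) (\<lambda>ys. \<phi> (take k (pre @ ys)) ((pre @ ys) ! k))
        = measure_pmf.expectation q (\<phi> pre)"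
      by (subst expectation_replicate_pmf_Suc[OF fq]) (simp add: len[symmetric])
  qed
  finally show ?thesis .
qed

lemma expectation_sum_list_replicate_pmf:
  fixes \<phi> :: "'b \<Rightarrow> real"
  assumes p: "finite (set_pmf p)"
  shows "measure_pmf.expectation (replicate_pmf n p) (\<lambda>S. \<Sum>j\<leftarrow>S. \<phi> j) = real n * measure_pmf.expectation p \<phi>"
proof (induction n)
  case (Suc n)
  have "measure_pmf.expectation (replicate_pmf (Suc n) p) (\<lambda>S. \<Sum>j\<leftarrow>S. \<phi> j)
      = measure_pmf.expectation p (\<lambda>x. \<phi> x + real n * measure_pmf.expectation p \<phi>)"
    using p finite_set_replicate_pmf[OF p, of n] Suc
    by (subst expectation_replicate_pmf_Suc[OF p]) (simp add: expectation_finite_pmf_add)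
  thus ?case using expectation_finite_pmf_add[OF p, of \<phi>] by (simp add: algebra_simps)
qed simp

lemma expectation_norm_sum_list_sq_replicate_pmf:
  fixes Z :: "'b \<Rightarrow> 'v::real_inner"
  assumes p: "finite (set_pmf p)" and centred: "\<And>a. measure_pmf.expectation p (\<lambda>j. inner (Z j) a) = 0"
  shows "measure_pmf.expectation (replicate_pmf n p) (\<lambda>S. (norm (\<Sum>j\<leftarrow>S. Z j))\<^sup>2)
        = real n * measure_pmf.expectation p (\<lambda>j. (norm (Z j))\<^sup>2)"
proof (induction n)
  case (Suc n)
  define R where "R = replicate_pmf n p"
  have fR: "finite (set_pmf R)" unfolding R_def by (rule finite_set_replicate_pmf[OF p])
  have cross: "measure_pmf.expectation p (\<lambda>x. measure_pmf.expectation R (\<lambda>xs. inner (Z x) (\<Sum>j\<leftarrow>xs. Z j))) = 0"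
    by (subst expectation_finite_pmf_swap[OF p fR]) (simp add: centred)
  define V where "V = measure_pmf.expectation p (\<lambda>j. (norm (Z j))\<^sup>2)"
  have "(norm (Z x + (\<Sum>j\<leftarrow>xs. Z j)))\<^sup>2
      = 2 * inner (Z x) (\<Sum>j\<leftarrow>xs. Z j) + (norm (\<Sum>j\<leftarrow>xs. Z j))\<^sup>2 + (norm (Z x))\<^sup>2" for x xs
    unfolding power2_norm_eq_inner by (simp add: inner_simps inner_commute)
  hence "measure_pmf.expectation R (\<lambda>xs. (norm (Z x + (\<Sum>j\<leftarrow>xs. Z j)))\<^sup>2)
      = (norm (Z x))\<^sup>2 + 2 * measure_pmf.expectation R (\<lambda>xs. inner (Z x) (\<Sum>j\<leftarrow>xs. Z j)) + real n * V" for x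
    using Suc expectation_finite_pmf_affine[OF fR, of 2 "\<lambda>xs. inner (Z x) (\<Sum>j\<leftarrow>xs. Z j)" 1
        "\<lambda>xs. (norm (\<Sum>j\<leftarrow>xs. Z j))\<^sup>2" "(norm (Z x))\<^sup>2"]
    by (simp add: R_def V_def)
  hence "measure_pmf.expectation (replicate_pmf (Suc n) p) (\<lambda>S. (norm (\<Sum>j\<leftarrow>S. Z j))\<^sup>2)
      = measure_pmf.expectation p (\<lambda>x. (norm (Z x))\<^sup>2
          + 2 * measure_pmf.expectation R (\<lambda>xs. inner (Z x) (\<Sum>j\<leftarrow>xs. Z j)) + real n * V)"
    unfolding R_def by (subst expectation_replicate_pmf_Suc[OF p]) simp
  also have "\<dots> = V + real n * V"
    using expectation_finite_pmf_affine[OF p, of 1 "\<lambda>x. (norm (Z x))\<^sup>2" 2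
        "\<lambda>x. measure_pmf.expectation R (\<lambda>xs. inner (Z x) (\<Sum>j\<leftarrow>xs. Z j))" "real n * V"] cross
    by (simp add: V_def)
  finally show ?case by (simp add: V_def algebra_simps)
qed simp

section \<open>One step of the method\<close>

locale omm_setting = proper_convex_lsc g for g :: "'a::euclidean_space \<Rightarrow> ereal" +
  fixes Fs :: "nat \<Rightarrow> 'a \<Rightarrow> 'a" and M b :: nat and Ls :: "nat \<Rightarrow> real" and L Lbar \<gamma> \<eta> :: real
  assumes M_pos: "M \<ge> 1" and b_pos: "b \<ge> 1" and L_pos: "L > 0"
    and F_lip: "L-lipschitz_on UNIV (avg_op M Fs)"
    and Fs_lip: "\<And>m. m < M \<Longrightarrow> (Ls m)-lipschitz_on UNIV (Fs m)"
    and Lbar_def: "Lbar = sqrt ((1 / real M) * (\<Sum>m<M. (Ls m)\<^sup>2))"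
    and Lbar_pos: "Lbar > 0"
    and \<gamma>_pos: "0 < \<gamma>" and \<gamma>_le: "\<gamma> \<le> 1 / 16"
    and \<eta>_def: "\<eta> = min (sqrt (\<gamma> * real b) / (8 * Lbar)) (1 / (8 * L))"
    and F_mono: "monotone_op (avg_op M Fs)"
begin

abbreviation F where "F \<equiv> avg_op M Fs"

lemma eta_pos: "\<eta> > 0"
  using \<gamma>_pos b_pos Lbar_pos L_pos by (simp add: \<eta>_def)

lemma eta_L_le: "\<eta> * L \<le> 1/8"
proof -
  have "\<eta> \<le> 1 / (8 * L)" by (simp add: \<eta>_def)
  thus ?thesis using L_pos by (simp add: field_simps)
qed

lemma eta_Lbar_sq_le: "\<eta>\<^sup>2 * Lbar\<^sup>2 \<le> \<gamma> * real b / 64"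
proof -
  have "\<eta> \<le> sqrt (\<gamma> * real b) / (8 * Lbar)" by (simp add: \<eta>_def)
  hence "\<eta> * Lbar \<le> sqrt (\<gamma> * real b) / 8" using Lbar_pos by (simp add: field_simps)
  hence "(\<eta> * Lbar)\<^sup>2 \<le> (sqrt (\<gamma> * real b) / 8)\<^sup>2"
    using eta_pos Lbar_pos by (intro power_mono) auto
  also have "\<dots> = \<gamma> * real b / 64" using \<gamma>_pos by (simp add: power_divide)
  finally show ?thesis by (simp add: power_mult_distrib)
qed

lemma inverse_eta_le: "1 / \<eta> \<le> 8 * Lbar / sqrt (\<gamma> * real b) + 8 * L"
proof (cases "sqrt (\<gamma> * real b) / (8 * Lbar) \<le> 1 / (8 * L)")
  case True
  thus ?thesis using L_pos by (simp add: \<eta>_def)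
next
  case False
  thus ?thesis using Lbar_pos \<gamma>_pos by (simp add: \<eta>_def)
qed

lemma F_lipschitz: "norm (F x - F y) \<le> L * norm (x - y)"
  using F_lip unfolding lipschitz_on_def by (simp add: dist_norm)

lemma Fs_lipschitz: "m < M \<Longrightarrow> norm (Fs m x - Fs m y) \<le> Ls m * norm (x - y)"
  using Fs_lip unfolding lipschitz_on_def by (simp add: dist_norm)

definition g_real :: "'a \<Rightarrow> real" where "g_real x = real_of_ereal (g x)"

text \<open>The state \<open>(xp, x, wp, w)\<close> stands for \<open>(x^(k-1), x^k, w^(k-1), w^k)\<close>, and
  \<open>noise\<close> is the error of the mini-batch estimate of \<open>mean_dir\<close>, so that
  \<open>Delta^k = 2 F x - F xp + noise\<close>.\<close>
definition sample_dir :: "nat \<Rightarrow> 'a \<Rightarrow> 'a \<Rightarrow> 'a \<Rightarrow> 'a" where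
  "sample_dir j x xp wp = (Fs j x - Fs j wp) + (Fs j x - Fs j xp)"

definition mean_dir :: "'a \<Rightarrow> 'a \<Rightarrow> 'a \<Rightarrow> 'a" where
  "mean_dir x xp wp = (F x - F wp) + (F x - F xp)"

definition noise :: "'a \<Rightarrow> 'a \<Rightarrow> 'a \<Rightarrow> nat list \<Rightarrow> 'a" where
  "noise x xp wp S = (1 / real b) *\<^sub>R (\<Sum>j\<leftarrow>S. sample_dir j x xp wp) - mean_dir x xp wp"

definition x_next :: "'a \<Rightarrow> 'a \<Rightarrow> 'a \<Rightarrow> 'a \<Rightarrow> nat list \<Rightarrow> 'a" where
  "x_next xp x wp w S = prox \<eta> g (x + \<gamma> *\<^sub>R (w - x) - \<eta> *\<^sub>R (2 *\<^sub>R F x - F xp + noise x xp wp S))"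

definition x_ghost :: "'a \<Rightarrow> 'a \<Rightarrow> 'a \<Rightarrow> 'a" where
  "x_ghost xp x w = prox \<eta> g (x + \<gamma> *\<^sub>R (w - x) - \<eta> *\<^sub>R (2 *\<^sub>R F x - F xp))"

definition w_next :: "'a \<Rightarrow> 'a \<Rightarrow> 'a \<Rightarrow> 'a \<Rightarrow> nat list \<Rightarrow> bool \<Rightarrow> 'a" where
  "w_next xp x wp w S c = (if c then x_next xp x wp w S else w)"

lemma omm_step_eq:
  "omm_step M Fs g \<eta> \<gamma> b (xp, x, wp, w) (S, c) = (x, x_next xp x wp w S, w, w_next xp x wp w S c)"
proof -
  have "(1 / real b) *\<^sub>R (\<Sum>j\<leftarrow>S. (Fs j x - Fs j wp) + (Fs j x - Fs j xp)) + F wp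
      = 2 *\<^sub>R F x - F xp + noise x xp wp S"
    by (simp add: noise_def mean_dir_def sample_dir_def algebra_simps scaleR_2)
  thus ?thesis by (simp add: omm_step_def x_next_def w_next_def Let_def)
qed

text \<open>Both quantities have mean zero when \<open>w' = x'\<close> with probability \<open>\<gamma>\<close> and \<open>w' = w\<close>
  otherwise.\<close>
definition w_noise :: "'a \<Rightarrow> 'a \<Rightarrow> 'a \<Rightarrow> 'a" where
  "w_noise x' w w' = w' - \<gamma> *\<^sub>R x' - (1 - \<gamma>) *\<^sub>R w"

definition w_sq_noise :: "'a \<Rightarrow> 'a \<Rightarrow> 'a \<Rightarrow> real" where
  "w_sq_noise x' w w' = ((norm w')\<^sup>2 - \<gamma> * (norm x')\<^sup>2 - (1 - \<gamma>) * (norm w)\<^sup>2) / 2"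

text \<open>The ghost points \<open>v, v'\<close> absorb the inner products of the
  comparison point \<open>u\<close> with the zero-mean errors, which cannot be averaged out directly because
  \<open>u\<close> ranges over \<open>C\<close> inside the supremum defining the gap.\<close>
definition Psi :: "'a \<Rightarrow> 'a \<Rightarrow> 'a \<Rightarrow> 'a \<Rightarrow> 'a \<Rightarrow> 'a \<Rightarrow> 'a \<Rightarrow> real" where
  "Psi xp x wp w v v' u = (1 - \<gamma>)/2 * (norm (x - u))\<^sup>2 + 1/2 * (norm (w - u))\<^sup>2
     - \<eta> * inner (F x - F xp) (x - u) + 1/8 * (norm (x - xp))\<^sup>2 + \<gamma>/16 * (norm (x - wp))\<^sup>2
     + 1/4 * (norm (v - u))\<^sup>2 + 3/4 * (norm (v' - u))\<^sup>2"

text \<open>The part of the one-step bound free of \<open>u\<close>: \<open>x', w'\<close> are the new iterates, \<open>e\<close> the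
  noise and \<open>xt\<close> the noise-free prox point.\<close>
definition residual :: "'a \<Rightarrow> 'a \<Rightarrow> 'a \<Rightarrow> 'a \<Rightarrow> 'a \<Rightarrow> 'a \<Rightarrow> 'a \<Rightarrow> 'a \<Rightarrow> 'a \<Rightarrow> 'a \<Rightarrow> real" where
  "residual xp x wp w v v' x' w' e xt =
     - (1 - \<gamma>)/2 * (norm (x' - x))\<^sup>2 - \<gamma>/2 * (norm (x' - w))\<^sup>2
     - \<eta> * inner (F x - F xp) (x' - x) - \<eta> * inner e (x' - xt) - \<eta> * inner e (xt - v)
     + \<eta>\<^sup>2 * (norm e)\<^sup>2 + w_sq_noise x' w w' - inner (w_noise x' w w') v' + 1/3 * (norm (w_noise x' w w'))\<^sup>2
     - 1/8 * (norm (x - xp))\<^sup>2 - \<gamma>/16 * (norm (x - wp))\<^sup>2 + 1/8 * (norm (x' - x))\<^sup>2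
     + \<gamma>/16 * (norm (x' - w))\<^sup>2"

lemma prox_step_ineq:
  assumes gu: "g u = ereal gu" and x': "x' = prox \<eta> g (x + \<gamma> *\<^sub>R (w - x) - \<eta> *\<^sub>R D)"
  shows "\<eta> * (inner (F x') (x' - u) + g_real x' - gu) \<le>
      inner (x + \<gamma> *\<^sub>R (w - x) - x') (x' - u) + \<eta> * inner (F x' - D) (x' - u)"
proof -
  define A where "A = x + \<gamma> *\<^sub>R (w - x) - \<eta> *\<^sub>R D"
  have "\<eta> * g_real x' + inner (A - x') (u - x') \<le> \<eta> * gu"
    using prox_variational_ineq[OF eta_pos gu, of A] x' by (simp add: A_def g_real_def)
  moreover have "inner (A - x') (u - x') + inner (x + \<gamma> *\<^sub>R (w - x) - x') (x' - u)
      + \<eta> * inner (F x' - D) (x' - u) = \<eta> * inner (F x') (x' - u)"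
    unfolding A_def by (simp add: inner_simps algebra_simps)
  ultimately show ?thesis by (simp add: algebra_simps)
qed

lemma one_step_ineq:
  assumes gu: "g u = ereal gu" and x': "x' = prox \<eta> g (x + \<gamma> *\<^sub>R (w - x) - \<eta> *\<^sub>R (2 *\<^sub>R F x - F xp + e))"
  shows "\<eta> * (inner (F x') (x' - u) + g_real x' - gu) \<le>
     Psi xp x wp w v v' u - Psi x x' w w' (v + (2 * \<eta>) *\<^sub>R e) (v' - (2/3) *\<^sub>R w_noise x' w w') u
     + residual xp x wp w v v' x' w' e xt"
proof -
  have i1: "inner (x + \<gamma> *\<^sub>R (w - x) - x') (x' - u) =
    (1 - \<gamma>)/2 * (norm (x - u))\<^sup>2 + \<gamma>/2 * (norm (w - u))\<^sup>2
    + (- (1 - \<gamma>)/2 * (norm (x' - u))\<^sup>2 + (- \<gamma>/2 * (norm (x' - u))\<^sup>2))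
    - (1 - \<gamma>)/2 * (norm (x' - x))\<^sup>2 - \<gamma>/2 * (norm (x' - w))\<^sup>2"
    unfolding power2_norm_eq_inner by (simp add: inner_simps inner_commute algebra_simps) (simp add: field_simps)
  have i2: "\<eta> * inner (F x' - (2 *\<^sub>R F x - F xp + e)) (x' - u) =
    \<eta> * inner (F x' - F x) (x' - u) - \<eta> * inner (F x - F xp) (x - u) - \<eta> * inner (F x - F xp) (x' - x)
    + (- \<eta> * inner e (x' - u))"
    by (simp add: inner_simps inner_commute algebra_simps)
  have i3: "- \<eta> * inner e (x' - u) = - \<eta> * inner e (x' - xt) - \<eta> * inner e (xt - v)
     + 1/4 * (norm (v - u))\<^sup>2 - 1/4 * (norm (v + (2 * \<eta>) *\<^sub>R e - u))\<^sup>2 + \<eta>\<^sup>2 * (norm e)\<^sup>2"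
    unfolding power2_norm_eq_inner by (simp add: inner_simps inner_commute algebra_simps power2_eq_square)
  have i4: "- \<gamma>/2 * (norm (x' - u))\<^sup>2 = (1 - \<gamma>)/2 * (norm (w - u))\<^sup>2 - 1/2 * (norm (w' - u))\<^sup>2
    + w_sq_noise x' w w' + (- inner (w_noise x' w w') u)"
    unfolding w_sq_noise_def w_noise_def power2_norm_eq_inner
    by (simp add: inner_simps inner_commute algebra_simps) (simp add: field_simps)
  have i5: "- inner (w_noise x' w w') u = - inner (w_noise x' w w') v' + 3/4 * (norm (v' - u))\<^sup>2
     - 3/4 * (norm (v' - (2/3) *\<^sub>R w_noise x' w w' - u))\<^sup>2 + 1/3 * (norm (w_noise x' w w'))\<^sup>2"
    unfolding power2_norm_eq_inner by (simp add: inner_simps inner_commute algebra_simps)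
  have "inner (x + \<gamma> *\<^sub>R (w - x) - x') (x' - u) + \<eta> * inner (F x' - (2 *\<^sub>R F x - F xp + e)) (x' - u) =
     Psi xp x wp w v v' u - Psi x x' w w' (v + (2 * \<eta>) *\<^sub>R e) (v' - (2/3) *\<^sub>R w_noise x' w w') u
     + residual xp x wp w v v' x' w' e xt"
    unfolding Psi_def residual_def i1 i2 i3 i4 i5 by (simp add: field_simps)
  thus ?thesis using prox_step_ineq[OF gu x'] by simp
qed

abbreviation index_pmf :: "nat pmf" where "index_pmf \<equiv> pmf_of_set {..<M}"
abbreviation batch_pmf :: "nat list pmf" where "batch_pmf \<equiv> replicate_pmf b index_pmf"

lemma finite_index_pmf: "finite (set_pmf index_pmf)"
  using M_pos by (subst set_pmf_of_set) (auto simp: lessThan_empty_iff)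

lemma finite_batch_pmf: "finite (set_pmf batch_pmf)"
  by (rule finite_set_replicate_pmf[OF finite_index_pmf])

lemma expectation_index_pmf: "measure_pmf.expectation index_pmf f = (\<Sum>j<M. f j) / real M"
  using M_pos by (subst integral_pmf_of_set) (auto simp: lessThan_empty_iff)

lemma sum_sample_dir: "(\<Sum>j<M. sample_dir j x xp wp) = real M *\<^sub>R mean_dir x xp wp"
  using M_pos by (simp add: sample_dir_def mean_dir_def avg_op_def sum.distrib sum_subtractf algebra_simps)

lemma noise_eq_sum_sample_dev:
  assumes "length S = b"
  shows "noise x xp wp S = (1 / real b) *\<^sub>R (\<Sum>j\<leftarrow>S. sample_dir j x xp wp - mean_dir x xp wp)"
proof -
  have "(\<Sum>j\<leftarrow>S. sample_dir j x xp wp - mean_dir x xp wp)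
      = (\<Sum>j\<leftarrow>S. sample_dir j x xp wp) - real (length S) *\<^sub>R mean_dir x xp wp"
    by (induction S) (auto simp: algebra_simps)
  hence "(1 / real b) *\<^sub>R (\<Sum>j\<leftarrow>S. sample_dir j x xp wp - mean_dir x xp wp)
      = (1 / real b) *\<^sub>R (\<Sum>j\<leftarrow>S. sample_dir j x xp wp) - mean_dir x xp wp"
    using assms b_pos by (simp add: scaleR_diff_right)
  thus ?thesis by (simp add: noise_def)
qed

lemma sample_dev_centred:
  "measure_pmf.expectation index_pmf (\<lambda>j. inner (sample_dir j x xp wp - mean_dir x xp wp) a) = 0"
proof -
  have "(\<Sum>j<M. inner (sample_dir j x xp wp - mean_dir x xp wp) a)
      = inner ((\<Sum>j<M. sample_dir j x xp wp) - real M *\<^sub>R mean_dir x xp wp) a"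
    by (simp add: inner_sum_left sum_subtractf inner_diff_left)
  thus ?thesis by (simp add: expectation_index_pmf sum_sample_dir)
qed

lemma expectation_noise_inner: "measure_pmf.expectation batch_pmf (\<lambda>S. inner (noise x xp wp S) a) = 0"
proof -
  have "inner (\<Sum>j\<leftarrow>S. Z j) a = (\<Sum>j\<leftarrow>S. inner (Z j) a)" for S and Z :: "nat \<Rightarrow> 'a"
    by (induction S) (auto simp: inner_add_left)
  hence "measure_pmf.expectation batch_pmf (\<lambda>S. inner (noise x xp wp S) a)
      = measure_pmf.expectation batch_pmf
          (\<lambda>S. (1 / real b) * (\<Sum>j\<leftarrow>S. inner (sample_dir j x xp wp - mean_dir x xp wp) a))"
    using finite_batch_pmf
    by (intro expectation_finite_pmf_cong) (auto simp: noise_eq_sum_sample_dev set_replicate_pmf)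
  thus ?thesis
    by (simp add: expectation_sum_list_replicate_pmf[OF finite_index_pmf] sample_dev_centred)
qed

lemma sample_dir_norm_sq_le:
  assumes m: "m < M"
  shows "(norm (sample_dir m x xp wp))\<^sup>2 \<le> 2 * (Ls m)\<^sup>2 * ((norm (x - wp))\<^sup>2 + (norm (x - xp))\<^sup>2)"
proof -
  have "norm (sample_dir m x xp wp) \<le> norm (Fs m x - Fs m wp) + norm (Fs m x - Fs m xp)"
    unfolding sample_dir_def by (rule norm_triangle_ineq)
  also have "\<dots> \<le> Ls m * norm (x - wp) + Ls m * norm (x - xp)"
    using Fs_lipschitz[OF m] by (intro add_mono) auto
  finally have "(norm (sample_dir m x xp wp))\<^sup>2 \<le> (Ls m * norm (x - wp) + Ls m * norm (x - xp))\<^sup>2"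
    by (intro power_mono) auto
  also have "\<dots> \<le> 2 * (Ls m * norm (x - wp))\<^sup>2 + 2 * (Ls m * norm (x - xp))\<^sup>2"
    using sum_squares_ge_zero[of "Ls m * norm (x - wp) - Ls m * norm (x - xp)" 0]
    by (simp add: power2_eq_square algebra_simps)
  finally show ?thesis by (simp add: power_mult_distrib algebra_simps)
qed

lemma sample_dev_second_moment_le:
  "measure_pmf.expectation index_pmf (\<lambda>j. (norm (sample_dir j x xp wp - mean_dir x xp wp))\<^sup>2)
     \<le> 2 * Lbar\<^sup>2 * ((norm (x - wp))\<^sup>2 + (norm (x - xp))\<^sup>2)"
proof -
  define Y where "Y j = sample_dir j x xp wp" for j
  define Yb where "Yb = mean_dir x xp wp"
  define cc where "cc = (norm (x - wp))\<^sup>2 + (norm (x - xp))\<^sup>2"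
  have "(\<Sum>j<M. (norm (Y j - Yb))\<^sup>2)
      = (\<Sum>j<M. (norm (Y j))\<^sup>2) - 2 * inner (\<Sum>j<M. Y j) Yb + real M * (norm Yb)\<^sup>2"
    unfolding power2_norm_eq_inner
    by (simp add: inner_simps inner_commute sum.distrib sum_subtractf inner_sum_left inner_sum_right
        sum_distrib_left)
  also have "\<dots> = (\<Sum>j<M. (norm (Y j))\<^sup>2) - real M * (norm Yb)\<^sup>2"
    unfolding Y_def Yb_def sum_sample_dir by (simp add: power2_norm_eq_inner)
  also have "\<dots> \<le> (\<Sum>j<M. 2 * (Ls j)\<^sup>2 * cc)"
  proof -
    have "(\<Sum>j<M. (norm (Y j))\<^sup>2) \<le> (\<Sum>j<M. 2 * (Ls j)\<^sup>2 * cc)"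
      unfolding Y_def cc_def by (intro sum_mono sample_dir_norm_sq_le) auto
    moreover have "real M * (norm Yb)\<^sup>2 \<ge> 0" by simp
    ultimately show ?thesis by linarith
  qed
  also have "\<dots> = real M * (2 * Lbar\<^sup>2 * cc)"
    using M_pos by (simp add: Lbar_def sum_distrib_right[symmetric] sum_distrib_left[symmetric] sum_nonneg)
  finally show ?thesis
    using M_pos by (simp add: expectation_index_pmf Y_def Yb_def cc_def field_simps)
qed

lemma expectation_noise_sq:
  "measure_pmf.expectation batch_pmf (\<lambda>S. (norm (noise x xp wp S))\<^sup>2)
     \<le> 2 * Lbar\<^sup>2 / real b * ((norm (x - wp))\<^sup>2 + (norm (x - xp))\<^sup>2)"
proof -
  define Z where "Z j = sample_dir j x xp wp - mean_dir x xp wp" for j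
  have "measure_pmf.expectation batch_pmf (\<lambda>S. (norm (noise x xp wp S))\<^sup>2)
      = measure_pmf.expectation batch_pmf (\<lambda>S. (1 / real b)\<^sup>2 * (norm (\<Sum>j\<leftarrow>S. Z j))\<^sup>2)"
    using finite_batch_pmf
    by (intro expectation_finite_pmf_cong) (auto simp: noise_eq_sum_sample_dev set_replicate_pmf Z_def power_divide)
  also have "\<dots> = (1 / real b)\<^sup>2 * (real b * measure_pmf.expectation index_pmf (\<lambda>j. (norm (Z j))\<^sup>2))"
    by (simp add: expectation_norm_sum_list_sq_replicate_pmf[OF finite_index_pmf] sample_dev_centred Z_def)
  also have "\<dots> = (1 / real b) * measure_pmf.expectation index_pmf (\<lambda>j. (norm (Z j))\<^sup>2)"
    using b_pos by (simp add: power2_eq_square)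
  also have "\<dots> \<le> (1 / real b) * (2 * Lbar\<^sup>2 * ((norm (x - wp))\<^sup>2 + (norm (x - xp))\<^sup>2))"
    unfolding Z_def by (intro mult_left_mono sample_dev_second_moment_le) auto
  finally show ?thesis by simp
qed

lemma eta_inner_F_diff_le: "\<eta> * \<bar>inner (F x - F xp) z\<bar> \<le> 1/8 * (norm (x - xp) * norm z)"
proof -
  have "\<bar>inner (F x - F xp) z\<bar> \<le> norm (F x - F xp) * norm z" by (rule Cauchy_Schwarz_ineq2)
  also have "\<dots> \<le> L * norm (x - xp) * norm z" using F_lipschitz[of x xp] by (intro mult_right_mono) auto
  finally have "\<eta> * \<bar>inner (F x - F xp) z\<bar> \<le> (\<eta> * L) * (norm (x - xp) * norm z)"
    using mult_left_mono[of _ _ \<eta>] eta_pos by (simp add: mult.assoc)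
  also have "\<dots> \<le> 1/8 * (norm (x - xp) * norm z)" using eta_L_le by (intro mult_right_mono) auto
  finally show ?thesis .
qed

lemma x_next_ghost_dist: "norm (x_next xp x wp w S - x_ghost xp x w) \<le> \<eta> * norm (noise x xp wp S)"
proof -
  have "norm (x_next xp x wp w S - x_ghost xp x w) \<le> norm (\<eta> *\<^sub>R noise x xp wp S)"
    unfolding x_next_def x_ghost_def
    by (rule order_trans[OF prox_nonexpansive[OF eta_pos]]) (simp add: algebra_simps)
  thus ?thesis using eta_pos by simp
qed

definition step_residual :: "'a \<Rightarrow> 'a \<Rightarrow> 'a \<Rightarrow> 'a \<Rightarrow> 'a \<Rightarrow> 'a \<Rightarrow> nat list \<Rightarrow> bool \<Rightarrow> real" where
  "step_residual xp x wp w v v' S c =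
     residual xp x wp w v v' (x_next xp x wp w S) (w_next xp x wp w S c) (noise x xp wp S) (x_ghost xp x w)"

definition coin_terms :: "'a \<Rightarrow> 'a \<Rightarrow> 'a \<Rightarrow> bool \<Rightarrow> real" where
  "coin_terms x' w v' c = w_sq_noise x' w (if c then x' else w) - inner (w_noise x' w (if c then x' else w)) v'
     + 1/3 * (norm (w_noise x' w (if c then x' else w)))\<^sup>2"

lemma expectation_coin_terms:
  "measure_pmf.expectation (bernoulli_pmf \<gamma>) (coin_terms x' w v') = \<gamma> * (1 - \<gamma>) / 3 * (norm (x' - w))\<^sup>2"
proof -
  have "coin_terms x' w v' True * \<gamma> + coin_terms x' w v' False * (1 - \<gamma>) = \<gamma> * (1 - \<gamma>) / 3 * (norm (x' - w))\<^sup>2"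
    unfolding coin_terms_def w_sq_noise_def w_noise_def power2_norm_eq_inner
    by (simp add: inner_simps inner_commute algebra_simps) (simp add: field_simps)
  thus ?thesis using \<gamma>_pos \<gamma>_le by simp
qed

lemma step_residual_le:
  "step_residual xp x wp w v v' S c \<le> coin_terms (x_next xp x wp w S) w v' c
     - \<eta> * inner (noise x xp wp S) (x_ghost xp x w - v) + 2 * \<eta>\<^sup>2 * (norm (noise x xp wp S))\<^sup>2
     - 7 * \<gamma> / 16 * (norm (x_next xp x wp w S - w))\<^sup>2 - 1/16 * (norm (x - xp))\<^sup>2 - \<gamma>/16 * (norm (x - wp))\<^sup>2"
proof -
  define x' where "x' = x_next xp x wp w S"
  define e where "e = noise x xp wp S"
  define xt where "xt = x_ghost xp x w"
  have F_diff: "- \<eta> * inner (F x - F xp) (x' - x) \<le> 1/16 * (norm (x - xp))\<^sup>2 + 1/16 * (norm (x' - x))\<^sup>2"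
  proof -
    define i where "i = inner (F x - F xp) (x' - x)"
    have "- \<eta> * i \<le> \<eta> * \<bar>i\<bar>"
      using mult_left_mono[OF abs_ge_minus_self[of i] less_imp_le[OF eta_pos]] by simp
    also have "\<dots> \<le> 1/8 * (norm (x - xp) * norm (x' - x))" unfolding i_def by (rule eta_inner_F_diff_le)
    also have "\<dots> \<le> 1/16 * (norm (x - xp))\<^sup>2 + 1/16 * (norm (x' - x))\<^sup>2"
      using sum_squares_ge_zero[of "norm (x - xp) - norm (x' - x)" 0]
      by (simp add: power2_eq_square algebra_simps)
    finally show ?thesis unfolding i_def .
  qed
  have ghost: "- \<eta> * inner e (x' - xt) \<le> \<eta>\<^sup>2 * (norm e)\<^sup>2"
  proof -
    have "- \<eta> * inner e (x' - xt) \<le> \<eta> * (norm e * norm (x' - xt))"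
      using mult_left_mono[OF order_trans[OF abs_ge_minus_self Cauchy_Schwarz_ineq2] less_imp_le[OF eta_pos]]
      by simp
    also have "\<dots> \<le> \<eta> * (norm e * (\<eta> * norm e))"
      using eta_pos x_next_ghost_dist[of xp x wp w S] unfolding x'_def xt_def e_def
      by (intro mult_left_mono) auto
    finally show ?thesis by (simp add: power2_eq_square algebra_simps)
  qed
  have "(- (1 - \<gamma>)/2 + 3/16) * (norm (x' - x))\<^sup>2 \<le> 0"
    using \<gamma>_le by (intro mult_nonpos_nonneg) (auto simp: field_simps)
  moreover have "step_residual xp x wp w v v' S c = coin_terms x' w v' c - \<eta> * inner e (xt - v) + \<eta>\<^sup>2 * (norm e)\<^sup>2
      - 7 * \<gamma> / 16 * (norm (x' - w))\<^sup>2 - 1/8 * (norm (x - xp))\<^sup>2 - \<gamma>/16 * (norm (x - wp))\<^sup>2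
      + (- \<eta> * inner (F x - F xp) (x' - x)) + (- \<eta> * inner e (x' - xt))
      + (- (1 - \<gamma>)/2 + 3/16) * (norm (x' - x))\<^sup>2 - 1/16 * (norm (x' - x))\<^sup>2"
    unfolding step_residual_def residual_def coin_terms_def w_next_def x'_def e_def xt_def
    by (simp add: field_simps)
  ultimately show ?thesis using F_diff ghost unfolding x'_def e_def xt_def by linarith
qed

abbreviation sample_pmf :: "(nat list \<times> bool) pmf" where
  "sample_pmf \<equiv> pair_pmf batch_pmf (bernoulli_pmf \<gamma>)"

lemma finite_sample_pmf: "finite (set_pmf sample_pmf)"
  using finite_batch_pmf finite_set_bernoulli_pmf by simp

lemma expectation_coin_step_residual_le:
  "measure_pmf.expectation (bernoulli_pmf \<gamma>) (step_residual xp x wp w v v' S)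
     \<le> - \<eta> * inner (noise x xp wp S) (x_ghost xp x w - v) + 2 * \<eta>\<^sup>2 * (norm (noise x xp wp S))\<^sup>2
       + (- 1/16 * (norm (x - xp))\<^sup>2 - \<gamma>/16 * (norm (x - wp))\<^sup>2)"
proof -
  define x' where "x' = x_next xp x wp w S"
  define r where "r = - \<eta> * inner (noise x xp wp S) (x_ghost xp x w - v) + 2 * \<eta>\<^sup>2 * (norm (noise x xp wp S))\<^sup>2
     - 7 * \<gamma> / 16 * (norm (x' - w))\<^sup>2 - 1/16 * (norm (x - xp))\<^sup>2 - \<gamma>/16 * (norm (x - wp))\<^sup>2"
  have "measure_pmf.expectation (bernoulli_pmf \<gamma>) (step_residual xp x wp w v v' S)
      \<le> measure_pmf.expectation (bernoulli_pmf \<gamma>) (\<lambda>c. coin_terms x' w v' c + r)"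
    using finite_set_bernoulli_pmf step_residual_le unfolding x'_def r_def
    by (intro expectation_finite_pmf_mono) (auto simp: algebra_simps)
  also have "\<dots> = \<gamma> * (1 - \<gamma>) / 3 * (norm (x' - w))\<^sup>2 + r"
    using expectation_finite_pmf_add[OF finite_set_bernoulli_pmf, where f = "coin_terms x' w v'" and h = "\<lambda>_. r"]
    by (simp add: expectation_coin_terms)
  also have "\<dots> \<le> 7 * \<gamma> / 16 * (norm (x' - w))\<^sup>2 + r"
    using \<gamma>_pos by (intro add_right_mono mult_right_mono) (auto simp: field_simps)
  finally show ?thesis by (simp add: r_def)
qed

lemma expectation_step_residual_nonpos:
  "measure_pmf.expectation sample_pmf (\<lambda>(S, c). step_residual xp x wp w v v' S c) \<le> 0"
proof -
  define dx where "dx = (norm (x - xp))\<^sup>2"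
  define cw where "cw = (norm (x - wp))\<^sup>2"
  have "measure_pmf.expectation sample_pmf (\<lambda>(S, c). step_residual xp x wp w v v' S c)
      = measure_pmf.expectation batch_pmf
          (\<lambda>S. measure_pmf.expectation (bernoulli_pmf \<gamma>) (step_residual xp x wp w v v' S))"
    by (simp add: expectation_pair_finite_pmf[OF finite_batch_pmf finite_set_bernoulli_pmf])
  also have "\<dots> \<le> measure_pmf.expectation batch_pmf
      (\<lambda>S. - \<eta> * inner (noise x xp wp S) (x_ghost xp x w - v) + 2 * \<eta>\<^sup>2 * (norm (noise x xp wp S))\<^sup>2
        + (- 1/16 * dx - \<gamma>/16 * cw))"
    using finite_batch_pmf expectation_coin_step_residual_le unfolding dx_def cw_def
    by (intro expectation_finite_pmf_mono) auto
  also have "\<dots> = 2 * \<eta>\<^sup>2 * measure_pmf.expectation batch_pmf (\<lambda>S. (norm (noise x xp wp S))\<^sup>2)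
      + (- 1/16 * dx - \<gamma>/16 * cw)"
    using expectation_finite_pmf_affine[OF finite_batch_pmf, where a = "- \<eta>"
        and f = "\<lambda>S. inner (noise x xp wp S) (x_ghost xp x w - v)" and c = "2 * \<eta>\<^sup>2"
        and h = "\<lambda>S. (norm (noise x xp wp S))\<^sup>2"]
    by (simp add: expectation_noise_inner)
  also have "\<dots> \<le> 2 * \<eta>\<^sup>2 * (2 * Lbar\<^sup>2 / real b * (cw + dx)) + (- 1/16 * dx - \<gamma>/16 * cw)"
    using expectation_noise_sq[of x xp wp] unfolding cw_def dx_def by (intro add_right_mono mult_left_mono) auto
  also have "\<dots> = 4 * (\<eta>\<^sup>2 * Lbar\<^sup>2) / real b * (cw + dx) + (- 1/16 * dx - \<gamma>/16 * cw)"
    by simp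
  also have "\<dots> \<le> 4 * (\<gamma> * real b / 64) / real b * (cw + dx) + (- 1/16 * dx - \<gamma>/16 * cw)"
    unfolding cw_def dx_def
    by (intro add_right_mono mult_right_mono divide_right_mono mult_left_mono eta_Lbar_sq_le) auto
  also have "\<dots> = (\<gamma> - 1) / 16 * dx"
    using b_pos by (simp add: field_simps)
  also have "\<dots> \<le> 0"
    using \<gamma>_le unfolding dx_def by (intro mult_nonpos_nonneg) auto
  finally show ?thesis .
qed

section \<open>Sample paths\<close>

abbreviation state :: "'a \<Rightarrow> (nat list \<times> bool) list \<Rightarrow> nat \<Rightarrow> 'a omm_state" where
  "state x0 \<omega>s k \<equiv> omm_iter M Fs g \<eta> \<gamma> b x0 \<omega>s k"

abbreviation x_at :: "'a \<Rightarrow> (nat list \<times> bool) list \<Rightarrow> nat \<Rightarrow> 'a" where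
  "x_at x0 \<omega>s k \<equiv> omm_x M Fs g \<eta> \<gamma> b x0 \<omega>s k"

text \<open>The ghost points of \<open>Psi\<close> along a sample path, moved as in \<open>one_step_ineq\<close>.\<close>
primrec ghost :: "'a \<Rightarrow> (nat list \<times> bool) list \<Rightarrow> nat \<Rightarrow> 'a \<times> 'a" where
  "ghost x0 \<omega>s 0 = (x0, x0)"
| "ghost x0 \<omega>s (Suc k) = (case state x0 \<omega>s k of (xp, x, wp, w) \<Rightarrow> case \<omega>s ! k of (S, c) \<Rightarrow>
     (fst (ghost x0 \<omega>s k) + (2 * \<eta>) *\<^sub>R noise x xp wp S,
      snd (ghost x0 \<omega>s k) - (2/3) *\<^sub>R w_noise (x_next xp x wp w S) w (w_next xp x wp w S c)))"

definition Psi_at :: "'a \<Rightarrow> (nat list \<times> bool) list \<Rightarrow> nat \<Rightarrow> 'a \<Rightarrow> real" where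
  "Psi_at x0 \<omega>s k u = (case state x0 \<omega>s k of (xp, x, wp, w) \<Rightarrow>
      Psi xp x wp w (fst (ghost x0 \<omega>s k)) (snd (ghost x0 \<omega>s k)) u)"

definition residual_at :: "'a \<Rightarrow> (nat list \<times> bool) list \<Rightarrow> nat \<Rightarrow> real" where
  "residual_at x0 \<omega>s k = (case state x0 \<omega>s k of (xp, x, wp, w) \<Rightarrow> case \<omega>s ! k of (S, c) \<Rightarrow>
      step_residual xp x wp w (fst (ghost x0 \<omega>s k)) (snd (ghost x0 \<omega>s k)) S c)"

lemma state_append: "k \<le> length pre \<Longrightarrow> state x0 (pre @ ys) k = state x0 pre k"
  by (induction k) (auto simp: nth_append)

lemma ghost_append: "k \<le> length pre \<Longrightarrow> ghost x0 (pre @ ys) k = ghost x0 pre k"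
  by (induction k) (auto simp: nth_append state_append)

lemma residual_at_eq_take:
  assumes "k < length \<omega>s"
  shows "residual_at x0 \<omega>s k = residual_at x0 (take k \<omega>s @ [\<omega>s ! k]) k"
proof -
  have "\<omega>s = take k \<omega>s @ drop k \<omega>s" by simp
  hence "state x0 \<omega>s k = state x0 (take k \<omega>s) k" "ghost x0 \<omega>s k = ghost x0 (take k \<omega>s) k"
    using assms state_append ghost_append by (metis length_take min.absorb4 order_refl)+
  thus ?thesis using assms
    by (simp add: residual_at_def state_append ghost_append nth_append min_absorb2)
qed

lemma expectation_residual_at_nonpos:
  assumes "k < K"
  shows "measure_pmf.expectation (replicate_pmf K sample_pmf) (\<lambda>\<omega>s. residual_at x0 \<omega>s k) \<le> 0"
proof -
  define \<phi> where "\<phi> pre = (\<lambda>\<omega>. residual_at x0 (pre @ [\<omega>]) k)" for pre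
  have "measure_pmf.expectation (replicate_pmf K sample_pmf) (\<lambda>\<omega>s. residual_at x0 \<omega>s k)
      = measure_pmf.expectation (replicate_pmf K sample_pmf) (\<lambda>\<omega>s. \<phi> (take k \<omega>s) (\<omega>s ! k))"
    using finite_set_replicate_pmf[OF finite_sample_pmf] assms
    by (intro expectation_finite_pmf_cong) (auto simp: set_replicate_pmf \<phi>_def intro!: residual_at_eq_take)
  also have "\<dots> = measure_pmf.expectation (replicate_pmf k sample_pmf)
      (\<lambda>pre. measure_pmf.expectation sample_pmf (\<phi> pre))"
    by (rule expectation_replicate_pmf_prefix_nth[OF finite_sample_pmf assms])
  also have "\<dots> \<le> measure_pmf.expectation (replicate_pmf k sample_pmf) (\<lambda>pre. 0)"
  proof (rule expectation_finite_pmf_mono[OF finite_set_replicate_pmf[OF finite_sample_pmf]])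
    fix pre assume "pre \<in> set_pmf (replicate_pmf k sample_pmf)"
    hence "k = length pre" by (simp add: set_replicate_pmf)
    moreover obtain xp x wp w where "state x0 pre k = (xp, x, wp, w)" by (cases "state x0 pre k") auto
    ultimately show "measure_pmf.expectation sample_pmf (\<phi> pre) \<le> 0"
      using expectation_step_residual_nonpos
      by (simp add: \<phi>_def residual_at_def state_append ghost_append case_prod_unfold)
  qed
  finally show ?thesis by simp
qed

lemma state_Suc:
  assumes "state x0 \<omega>s k = (xp, x, wp, w)" "\<omega>s ! k = (S, c)"
  shows "state x0 \<omega>s (Suc k) = (x, x_next xp x wp w S, w, w_next xp x wp w S c)"
  using assms by (simp add: omm_step_eq)

lemma x_at_Suc:
  assumes "state x0 \<omega>s k = (xp, x, wp, w)" "\<omega>s ! k = (S, c)"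
  shows "x_at x0 \<omega>s (Suc k) = x_next xp x wp w S"
  using state_Suc[OF assms] by (simp add: omm_x_def)

lemma g_x_at_Suc: "g (x_at x0 \<omega>s (Suc k)) = ereal (g_real (x_at x0 \<omega>s (Suc k)))"
proof -
  obtain xp x wp w where s: "state x0 \<omega>s k = (xp, x, wp, w)" by (cases "state x0 \<omega>s k") auto
  obtain S c where o: "\<omega>s ! k = (S, c)" by (cases "\<omega>s ! k") auto
  show ?thesis unfolding x_at_Suc[OF s o] x_next_def g_real_def by (rule prox_finite_value[OF eta_pos])
qed

lemma one_step_ineq_at:
  assumes gu: "g u = ereal gu"
  shows "\<eta> * (inner (F (x_at x0 \<omega>s (Suc k))) (x_at x0 \<omega>s (Suc k) - u) + g_real (x_at x0 \<omega>s (Suc k)) - gu)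
     \<le> Psi_at x0 \<omega>s k u - Psi_at x0 \<omega>s (Suc k) u + residual_at x0 \<omega>s k"
proof -
  obtain xp x wp w where s: "state x0 \<omega>s k = (xp, x, wp, w)" by (cases "state x0 \<omega>s k") auto
  obtain S c where o: "\<omega>s ! k = (S, c)" by (cases "\<omega>s ! k") auto
  obtain v v' where v: "ghost x0 \<omega>s k = (v, v')" by (cases "ghost x0 \<omega>s k") auto
  show ?thesis
    using one_step_ineq[OF gu x_next_def, where v = v and v' = v' and w' = "w_next xp x wp w S c"
        and xt = "x_ghost xp x w"]
    by (simp add: x_at_Suc[OF s o] Psi_at_def residual_at_def step_residual_def s o v omm_step_eq)
qed

lemma Psi_nonneg: "Psi xp x wp w v v' u \<ge> 0"
proof -
  define a where "a = norm (x - u)"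
  define s where "s = norm (x - xp)"
  have "\<eta> * inner (F x - F xp) (x - u) \<le> 1/8 * (s * a)"
    using eta_inner_F_diff_le[of x xp "x - u"] eta_pos unfolding a_def s_def
    by (smt (verit) abs_ge_self mult_left_mono)
  moreover have "15/32 * a\<^sup>2 \<le> (1 - \<gamma>)/2 * a\<^sup>2"
    using \<gamma>_le by (intro mult_right_mono) (auto simp: field_simps)
  moreover have "2 * (s * a) \<le> a\<^sup>2 + s\<^sup>2"
    using sum_squares_ge_zero[of "s - a" 0] by (simp add: power2_eq_square algebra_simps)
  moreover have "\<gamma>/16 * (norm (x - wp))\<^sup>2 \<ge> 0" using \<gamma>_pos by simp
  ultimately show ?thesis
    unfolding Psi_def a_def[symmetric] s_def[symmetric]
    using zero_le_power2[of a] zero_le_power2[of s] zero_le_power2[of "norm (w - u)"]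
      zero_le_power2[of "norm (v - u)"] zero_le_power2[of "norm (v' - u)"]
    by linarith
qed

lemma Psi_at_0_le: "Psi_at x0 \<omega>s 0 u \<le> 2 * (norm (x0 - u))\<^sup>2"
proof -
  have "Psi_at x0 \<omega>s 0 u = (2 - \<gamma>/2) * (norm (x0 - u))\<^sup>2"
    by (simp add: Psi_at_def Psi_def field_simps)
  also have "\<dots> \<le> 2 * (norm (x0 - u))\<^sup>2" using \<gamma>_pos by (intro mult_right_mono) auto
  finally show ?thesis .
qed

lemma telescoped_ineq:
  assumes gu: "g u = ereal gu"
  shows "\<eta> * (\<Sum>k<K. inner (F (x_at x0 \<omega>s (Suc k))) (x_at x0 \<omega>s (Suc k) - u)
                    + g_real (x_at x0 \<omega>s (Suc k)) - gu)
     \<le> 2 * (norm (x0 - u))\<^sup>2 + (\<Sum>k<K. residual_at x0 \<omega>s k)"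
proof -
  have telescope: "\<eta> * (\<Sum>k<n. inner (F (x_at x0 \<omega>s (Suc k))) (x_at x0 \<omega>s (Suc k) - u)
                    + g_real (x_at x0 \<omega>s (Suc k)) - gu)
     \<le> Psi_at x0 \<omega>s 0 u - Psi_at x0 \<omega>s n u + (\<Sum>k<n. residual_at x0 \<omega>s k)" for n
  proof (induction n)
    case (Suc n)
    thus ?case using one_step_ineq_at[OF gu, of x0 \<omega>s n] by (simp add: distrib_left)
  qed simp
  have "Psi_at x0 \<omega>s K u \<ge> 0"
    unfolding Psi_at_def by (cases "state x0 \<omega>s K") (auto intro: Psi_nonneg)
  thus ?thesis using telescope[of K] Psi_at_0_le[of x0 \<omega>s u] by linarith
qed

lemma F_monotone_inner: "inner (F u) (y - u) \<le> inner (F y) (y - u)"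
  using F_mono unfolding monotone_op_def by (metis diff_ge_0_iff_ge inner_diff_left)

lemma g_omm_avg_le:
  assumes "K \<ge> 1"
  shows "g (omm_avg M Fs g \<eta> \<gamma> b x0 K \<omega>s) \<le> ereal ((1 / real K) * (\<Sum>k<K. g_real (x_at x0 \<omega>s (Suc k))))"
  unfolding omm_avg_def by (rule convex_avg_le[OF g_x_at_Suc assms])

lemma gap_summand_le:
  fixes x0 :: 'a and \<omega>s :: "(nat list \<times> bool) list"
  assumes K: "K \<ge> 1" and gu: "g u = ereal gu"
  defines "z \<equiv> omm_avg M Fs g \<eta> \<gamma> b x0 K \<omega>s"
  shows "ereal (inner (F u) (z - u)) + g z - g u
      \<le> ereal ((2 * (norm (x0 - u))\<^sup>2 + (\<Sum>k<K. residual_at x0 \<omega>s k)) / (\<eta> * real K))"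
proof -
  define y where "y k = x_at x0 \<omega>s (Suc k)" for k
  have z: "z = (1 / real K) *\<^sub>R (\<Sum>k<K. y k)" by (simp add: z_def omm_avg_def y_def)
  obtain gz where gz: "g z = ereal gz" "gz \<le> (1 / real K) * (\<Sum>k<K. g_real (y k))"
    using g_omm_avg_le[OF K, of x0 \<omega>s] not_MInf[of z] unfolding z_def[symmetric] y_def[symmetric]
    by (cases "g z") auto
  have "inner (F u) (z - u) = (1 / real K) * (\<Sum>k<K. inner (F u) (y k - u))"
    unfolding z using K by (simp add: inner_diff_right inner_sum_right sum_subtractf field_simps)
  also have "\<dots> \<le> (1 / real K) * (\<Sum>k<K. inner (F (y k)) (y k - u))"
    by (intro mult_left_mono sum_mono F_monotone_inner) auto
  finally have "inner (F u) (z - u) + gz - gu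
      \<le> (1 / real K) * (\<Sum>k<K. inner (F (y k)) (y k - u)) + (1 / real K) * (\<Sum>k<K. g_real (y k)) - gu"
    using gz(2) by linarith
  also have "\<dots> = (1 / (\<eta> * real K)) * (\<eta> * (\<Sum>k<K. inner (F (y k)) (y k - u) + g_real (y k) - gu))"
    using K eta_pos by (simp add: sum.distrib sum_subtractf field_simps)
  also have "\<dots> \<le> (1 / (\<eta> * real K)) * (2 * (norm (x0 - u))\<^sup>2 + (\<Sum>k<K. residual_at x0 \<omega>s k))"
    using telescoped_ineq[OF gu] K eta_pos unfolding y_def by (intro mult_left_mono) auto
  finally show ?thesis using gz(1) gu by simp
qed

lemma gap_avg_le:
  assumes K: "K \<ge> 1" and C: "compact C"
  shows "Gap F g C (omm_avg M Fs g \<eta> \<gamma> b x0 K \<omega>s)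
     \<le> ereal ((2 * (SUP x\<in>C. (norm (x0 - x))\<^sup>2) + (\<Sum>k<K. residual_at x0 \<omega>s k)) / (\<eta> * real K))"
  unfolding Gap_def
proof (rule SUP_least)
  fix u assume u: "u \<in> C"
  define z where "z = omm_avg M Fs g \<eta> \<gamma> b x0 K \<omega>s"
  show "ereal (inner (F u) (z - u)) + g z - g u
      \<le> ereal ((2 * (SUP x\<in>C. (norm (x0 - x))\<^sup>2) + (\<Sum>k<K. residual_at x0 \<omega>s k)) / (\<eta> * real K))"
  proof (cases "g u")
    case (real gu)
    have "ereal (inner (F u) (z - u)) + g z - g u
        \<le> ereal ((2 * (norm (x0 - u))\<^sup>2 + (\<Sum>k<K. residual_at x0 \<omega>s k)) / (\<eta> * real K))"
      unfolding z_def by (rule gap_summand_le[OF K real])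
    also have "\<dots> \<le> ereal ((2 * (SUP x\<in>C. (norm (x0 - x))\<^sup>2) + (\<Sum>k<K. residual_at x0 \<omega>s k)) / (\<eta> * real K))"
      using norm_sq_le_SUP_compact[OF C u, of x0] K eta_pos by (simp add: divide_right_mono)
    finally show ?thesis .
  next
    case PInf
    thus ?thesis using g_omm_avg_le[OF K, of x0 \<omega>s] not_MInf[of z] unfolding z_def
      by (cases "g (omm_avg M Fs g \<eta> \<gamma> b x0 K \<omega>s)") auto
  qed simp
qed

lemma expectation_sum_residual_at_nonpos:
  "measure_pmf.expectation (replicate_pmf K sample_pmf) (\<lambda>\<omega>s. \<Sum>k<K. residual_at x0 \<omega>s k) \<le> 0"
  by (subst expectation_finite_pmf_sum[OF finite_set_replicate_pmf[OF finite_sample_pmf]])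
    (auto intro!: sum_nonpos expectation_residual_at_nonpos)

lemma expected_gap_le:
  assumes K: "K \<ge> 1" and C: "compact C"
  shows "omm_expected_gap M Fs g \<eta> \<gamma> \<gamma> b x0 C K
      \<le> ereal (2 / (\<eta> * real K) * (SUP x\<in>C. (norm (x0 - x))\<^sup>2))"
proof -
  define P where "P = omm_samples M b \<gamma> K"
  have P: "P = replicate_pmf K sample_pmf" by (simp add: omm_samples_def P_def)
  have fP: "finite (set_pmf P)" unfolding P by (rule finite_set_replicate_pmf[OF finite_sample_pmf])
  define D where "D = (SUP x\<in>C. (norm (x0 - x))\<^sup>2)"
  define R where "R = (\<lambda>\<omega>s. \<Sum>k<K. residual_at x0 \<omega>s k)"
  define B where "B = (\<lambda>\<omega>s. (2 * D + R \<omega>s) / (\<eta> * real K))"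
  have "omm_expected_gap M Fs g \<eta> \<gamma> \<gamma> b x0 C K
      = (\<Sum>\<omega>s\<in>set_pmf P. ereal (pmf P \<omega>s) * Gap F g C (omm_avg M Fs g \<eta> \<gamma> b x0 K \<omega>s))"
    by (simp add: omm_expected_gap_def P_def)
  also have "\<dots> \<le> (\<Sum>\<omega>s\<in>set_pmf P. ereal (pmf P \<omega>s) * ereal (B \<omega>s))"
    using gap_avg_le[OF K C] unfolding B_def R_def D_def by (intro sum_mono ereal_mult_left_mono) auto
  also have "\<dots> = ereal (measure_pmf.expectation P B)"
    by (simp add: expectation_finite_pmf[OF fP] mult.commute)
  also have "measure_pmf.expectation P B = 1 / (\<eta> * real K) * measure_pmf.expectation P R + 2 * D / (\<eta> * real K)"
    using expectation_finite_pmf_affine[OF fP, where a = "1 / (\<eta> * real K)" and f = R and c = 0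
        and k = "2 * D / (\<eta> * real K)"]
    unfolding B_def by (simp add: add_divide_distrib add.commute)
  also have "\<dots> \<le> 2 / (\<eta> * real K) * D"
    using expectation_sum_residual_at_nonpos eta_pos K unfolding P R_def
    by (simp add: divide_nonpos_pos)
  finally show ?thesis by (simp add: D_def)
qed

lemma expected_gap_le_eps:
  assumes C: "compact C" "C \<noteq> {}" and \<epsilon>: "\<epsilon> > 0" and K: "K \<ge> 1"
    and K_large: "real K \<ge> 16 * ((1 / sqrt (\<gamma> * real b)) * (Lbar * (SUP x\<in>C. (norm (x0 - x))\<^sup>2) / \<epsilon>)
                                 + L * (SUP x\<in>C. (norm (x0 - x))\<^sup>2) / \<epsilon>)"
  shows "omm_expected_gap M Fs g \<eta> \<gamma> \<gamma> b x0 C K \<le> ereal \<epsilon>"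
proof -
  define D where "D = (SUP x\<in>C. (norm (x0 - x))\<^sup>2)"
  obtain u where "u \<in> C" using C(2) by blast
  hence D: "D \<ge> 0" using norm_sq_le_SUP_compact[OF C(1), of u x0] unfolding D_def
    by (meson order_trans zero_le_power2)
  define X where "X = Lbar * D / sqrt (\<gamma> * real b) + L * D"
  have "sqrt (\<gamma> * real b) > 0" using \<gamma>_pos b_pos by simp
  hence "16 * ((1 / sqrt (\<gamma> * real b)) * (Lbar * D / \<epsilon>) + L * D / \<epsilon>) = 16 * X / \<epsilon>"
    using \<epsilon> by (simp add: X_def field_simps)
  hence X: "16 * X \<le> real K * \<epsilon>" using K_large \<epsilon> unfolding D_def[symmetric] by (simp add: field_simps)
  have "2 / (\<eta> * real K) * D = (2 * D / real K) * (1 / \<eta>)" by simp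
  also have "\<dots> \<le> (2 * D / real K) * (8 * Lbar / sqrt (\<gamma> * real b) + 8 * L)"
    using inverse_eta_le D K by (intro mult_left_mono) auto
  also have "\<dots> = 16 * X / real K" by (simp add: X_def field_simps)
  also have "\<dots> \<le> \<epsilon>" using X K by (simp add: field_simps)
  finally show ?thesis using expected_gap_le[OF K C(1), of x0] unfolding D_def
    by (meson ereal_less_eq(3) order.trans)
qed

end

theorem theorem1:
  fixes Fs :: "nat \<Rightarrow> 'a::euclidean_space \<Rightarrow> 'a"
    and M b :: nat
    and Ls :: "nat \<Rightarrow> real"
    and L Lbar p \<gamma> \<eta> :: real
    and g :: "'a \<Rightarrow> ereal"
    and x0 :: 'a
    and C :: "'a set"
  assumes g_proper: "proper_fun g"
    and g_convex: "ereal_convex g"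
    and g_lsc: "lsc_fun g"
    and M_pos: "M \<ge> 1"
    and VI_sol: "\<exists>xs. VI_solution (avg_op M Fs) g xs"
    and F_mono: "monotone_op (avg_op M Fs)"
    and L_pos: "L > 0"
    and F_lip: "L-lipschitz_on UNIV (avg_op M Fs)"
    and Fm_lip: "\<And>m. m < M \<Longrightarrow> (Ls m)-lipschitz_on UNIV (Fs m)"
    and Lbar_def: "Lbar = sqrt ((1 / real M) * (\<Sum>m<M. (Ls m)\<^sup>2))"
    and Lbar_pos: "Lbar > 0"
    and b_range: "1 \<le> b" "b \<le> M"
    and p_pos: "0 < p" and p_eq: "p = \<gamma>" and \<gamma>_le: "\<gamma> \<le> 1 / 16"
    and \<eta>_def: "\<eta> = min (sqrt (\<gamma> * real b) / (8 * Lbar)) (1 / (8 * L))"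
    and C_compact: "compact C" and C_ne: "C \<noteq> {}"
  shows "(\<forall>K. K \<ge> 1 \<longrightarrow>
            omm_expected_gap M Fs g \<eta> \<gamma> p b x0 C K
              \<le> ereal (2 / (\<eta> * real K) * (SUP x\<in>C. (norm (x0 - x))\<^sup>2)))
       \<and> (\<forall>\<epsilon>>0. \<forall>K. real K \<ge> 16 * ((1 / sqrt (p * real b)) * (Lbar * (SUP x\<in>C. (norm (x0 - x))\<^sup>2) / \<epsilon>)
                                   + L * (SUP x\<in>C. (norm (x0 - x))\<^sup>2) / \<epsilon>) \<and> K \<ge> 1 \<longrightarrow>
            omm_expected_gap M Fs g \<eta> \<gamma> p b x0 C K \<le> ereal \<epsilon>)"
proof -
  interpret omm_setting g Fs M b Ls L Lbar \<gamma> \<eta>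
    using assms by unfold_locales auto
  show ?thesis
    using expected_gap_le[OF _ C_compact] expected_gap_le_eps[OF C_compact C_ne] unfolding p_eq by blast
qed

end
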